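(* Let $A$ be an $\mathfrak h$-trivial formal deformation of the $\mathfrak a$-algebra $U(\mathfrak{sl}_2)$. Then $A$ is $\mathfrak b$-trivial: there exists a $\mathbb k[[h]]$-algebra isomorphism $g:U(\mathfrak{sl}_2)[[h]]\to A$ such that $g(H)=H$, $g(X^-)=X^-$, and $\bar g:U(\mathfrak{sl}_2)\to A/hA$ is an isomorphism of $\mathfrak a$-algebras. Moreover, such a $g$ is unique.
   Context: $\mathbb k$ is a field of characteristic zero, and $\mathbb k[[h]]$ is the ring of formal power series over $\mathbb k$. For a $\mathbb k$-vector space $V_0$, $V_0[[h]]$ denotes the module of formal series $\sum_{m\ge0}v_mh^m$ with $v_m\in V_0$. A $\mathbb k[[h]]$-module is topologically free if it is isomorphic to some $V_0[[h]]$. For a $\mathbb k[[h]]$-linear map $g$, $\bar g$ denotes the induced map modulo $h$. $\mathfrak a$ is the Lie algebra over $\mathbb k$ generated by $H,X^-,X^+$ subject to $[H,X^\pm]=\pm2X^\pm$. An $\mathfrak a$-algebra is an algebra with a structural homomorphism from $U(\mathfrak a)$; homomorphisms of such algebras commute with structural maps. $U(\mathfrak{sl}_2)$ is an $\mathfrak a$-algebra via the canonical projection (Chevalley generators $H,X^\pm$). We set $U_h(\mathfrak a):=U(\mathfrak a)[[h]]$. A formal deformation of the $\mathfrak a$-algebra $U(\mathfrak{sl}_2)$ is a $U_h(\mathfrak a)$-algebra $A$ that is topologically free as a $\mathbb k[[h]]$-module, with $A/hA\cong U(\mathfrak{sl}_2)$ as $\mathfrak a$-algebras (here $A/hA$ is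 an $\mathfrak a$-algebra via $U_h(\mathfrak a)/h\cong U(\mathfrak a)$). The images of $H,X^\pm$ in $A$ are again denoted $H,X^\pm$. Such an $A$ is $\mathfrak h$-trivial if there is a $\mathbb k[[h]]$-algebra isomorphism $g:U(\mathfrak{sl}_2)[[h]]\to A$ with $g(H)=H$ and $\bar g$ an isomorphism of $\mathfrak a$-algebras. *)

theory Defs
  imports "HOL-Library.Poly_Mapping" "HOL-Computational_Algebra.Formal_Power_Series"
begin

datatype gen = GH | GXm | GXp

datatype word = Word "gen list"

instantiation word :: monoid_add
begin
definition zero_word :: word where "zero_word = Word []"
fun plus_word :: "word \<Rightarrow> word \<Rightarrow> word" where
  "plus_word (Word a) (Word b) = Word (a @ b)"
instance
proof
  fix a b c :: word
  show "a + b + c = a + (b + c)" by (cases a; cases b; cases c) simp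
  show "0 + a = a" by (cases a) (simp add: zero_word_def)
  show "a + 0 = a" by (cases a) (simp add: zero_word_def)
qed
end

text \<open>Noncommutative polynomials over k in the letters H, X^-, X^+ (the tensor algebra).\<close>
type_synonym 'k freealg = "word \<Rightarrow>\<^sub>0 'k"

definition fgen :: "gen \<Rightarrow> 'k::ring_1 freealg" where
  "fgen x = Poly_Mapping.single (Word [x]) 1"


lemma word_sum_zero: "((0::word) = l + q) \<longleftrightarrow> l = 0 \<and> q = 0"
  by (cases l; cases q) (auto simp: zero_word_def)

lemma lookup_times_zero:
  fixes x y :: "word \<Rightarrow>\<^sub>0 'k::comm_ring_1"
  shows "Poly_Mapping.lookup (x * y) 0 = Poly_Mapping.lookup x 0 * Poly_Mapping.lookup y 0"
proof -
  have "Poly_Mapping.lookup (x * y) 0 = prod_fun (Poly_Mapping.lookup x) (Poly_Mapping.lookup y) 0"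
    by (simp add: times_poly_mapping.rep_eq)
  also have "\<dots> = (\<Sum>l. Poly_Mapping.lookup x l * (\<Sum>r. Poly_Mapping.lookup y r when 0 = l + r))"
    by (simp add: prod_fun_def)
  also have "(\<lambda>l. Poly_Mapping.lookup x l * (\<Sum>r. Poly_Mapping.lookup y r when 0 = l + r))
      = (\<lambda>l. Poly_Mapping.lookup x l * Poly_Mapping.lookup y 0 when l = 0)"
  proof
    fix l show "Poly_Mapping.lookup x l * (\<Sum>r. Poly_Mapping.lookup y r when 0 = l + r)
        = (Poly_Mapping.lookup x l * Poly_Mapping.lookup y 0 when l = 0)"
      by (cases "l = 0") (simp_all add: word_sum_zero when_def)
  qed
  finally show ?thesis by simp
qed

lemma lookup_fgen_zero: "Poly_Mapping.lookup (fgen x :: 'k::comm_ring_1 freealg) 0 = 0"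
  by (simp add: fgen_def lookup_single when_def zero_word_def)

definition sl2_rels :: "'k::comm_ring_1 freealg set" where
  "sl2_rels = { fgen GH * fgen GXp - fgen GXp * fgen GH - 2 * fgen GXp,
                fgen GH * fgen GXm - fgen GXm * fgen GH + 2 * fgen GXm,
                fgen GXp * fgen GXm - fgen GXm * fgen GXp - fgen GH }"

inductive_set sl2_ideal :: "'k::comm_ring_1 freealg set" where
  zero: "0 \<in> sl2_ideal"
| gen: "r \<in> sl2_rels \<Longrightarrow> a * r * b \<in> sl2_ideal"
| add: "x \<in> sl2_ideal \<Longrightarrow> y \<in> sl2_ideal \<Longrightarrow> x + y \<in> sl2_ideal"

lemma sl2_ideal_uminus: "x \<in> sl2_ideal \<Longrightarrow> - x \<in> sl2_ideal"
proof (induction rule: sl2_ideal.induct)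
  case zero then show ?case by (simp add: sl2_ideal.zero)
next
  case (gen r a b)
  then have "(- a) * r * b \<in> sl2_ideal" by (rule sl2_ideal.gen)
  then show ?case by simp
next
  case (add x y) then show ?case using sl2_ideal.add[of "-x" "-y"] by (simp add: add.commute)
qed

lemma sl2_ideal_diff:
  assumes "x \<in> sl2_ideal" "y \<in> sl2_ideal" shows "x - y \<in> sl2_ideal"
proof -
  have "x + - y \<in> sl2_ideal" using assms sl2_ideal.add sl2_ideal_uminus by blast
  then show ?thesis by simp
qed

lemma sl2_ideal_multl: "x \<in> sl2_ideal \<Longrightarrow> c * x \<in> sl2_ideal"
proof (induction rule: sl2_ideal.induct)
  case zero then show ?case by (simp add: sl2_ideal.zero)
next
  case (gen r a b)
  then have "(c * a) * r * b \<in> sl2_ideal" by (rule sl2_ideal.gen)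
  then show ?case by (simp add: mult.assoc)
next
  case (add x y) then show ?case using sl2_ideal.add by (simp add: distrib_left)
qed

lemma sl2_ideal_multr: "x \<in> sl2_ideal \<Longrightarrow> x * c \<in> sl2_ideal"
proof (induction rule: sl2_ideal.induct)
  case zero then show ?case by (simp add: sl2_ideal.zero)
next
  case (gen r a b)
  then have "a * r * (b * c) \<in> sl2_ideal" by (rule sl2_ideal.gen)
  then show ?case by (simp add: mult.assoc)
next
  case (add x y) then show ?case using sl2_ideal.add by (simp add: distrib_right)
qed


lemma sl2_ideal_augmentation: "x \<in> sl2_ideal \<Longrightarrow> Poly_Mapping.lookup x 0 = 0"
proof (induction rule: sl2_ideal.induct)
  case zero then show ?case by simp
next
  case (gen r a b)
  then have "Poly_Mapping.lookup r 0 = 0"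
    by (auto simp: sl2_rels_def lookup_minus lookup_add lookup_times_zero lookup_fgen_zero)
  then show ?case by (simp add: lookup_times_zero)
next
  case (add x y) then show ?case by (simp add: lookup_add)
qed

lemma one_notin_sl2_ideal: "(0::'k::comm_ring_1 freealg) - 1 \<notin> sl2_ideal"
proof
  assume "(0::'k freealg) - 1 \<in> sl2_ideal"
  then have "Poly_Mapping.lookup ((0::'k freealg) - 1) 0 = 0" by (rule sl2_ideal_augmentation)
  then show False by (simp add: lookup_minus)
qed

definition sl2_rel :: "'k::comm_ring_1 freealg \<Rightarrow> 'k freealg \<Rightarrow> bool" where
  "sl2_rel x y \<longleftrightarrow> x - y \<in> sl2_ideal"

lemma equivp_sl2_rel: "equivp sl2_rel"
proof (rule equivpI)
  show "reflp sl2_rel" by (auto intro: reflpI simp: sl2_rel_def sl2_ideal.zero)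
  show "symp sl2_rel"
    by (rule sympI) (metis sl2_rel_def sl2_ideal_uminus minus_diff_eq)
  show "transp sl2_rel"
  proof (rule transpI)
    fix x y z assume "sl2_rel x y" "sl2_rel y z"
    then have a: "x - y \<in> sl2_ideal" "y - z \<in> sl2_ideal" by (simp_all add: sl2_rel_def)
    have "(x - y) + (y - z) \<in> sl2_ideal" by (rule sl2_ideal.add[OF a])
    then show "sl2_rel x z" by (simp add: sl2_rel_def)
  qed
qed

quotient_type (overloaded) 'k usl2 = "'k::comm_ring_1 freealg" / sl2_rel
  by (rule equivp_sl2_rel)

lemma sl2_rel_refl[simp]: "sl2_rel x x"
  by (simp add: sl2_rel_def sl2_ideal.zero)

instantiation usl2 :: (comm_ring_1) ring_1
begin
lift_definition zero_usl2 :: "'a usl2" is 0 .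
lift_definition one_usl2 :: "'a usl2" is 1 .
lift_definition plus_usl2 :: "'a usl2 \<Rightarrow> 'a usl2 \<Rightarrow> 'a usl2" is "(+)"
proof -
  fix x x' y y' :: "'a freealg"
  assume "sl2_rel x x'" "sl2_rel y y'"
  then have "(x - x') + (y - y') \<in> sl2_ideal" by (auto simp: sl2_rel_def intro: sl2_ideal.add)
  then show "sl2_rel (x + y) (x' + y')" by (simp add: sl2_rel_def algebra_simps)
qed
lift_definition uminus_usl2 :: "'a usl2 \<Rightarrow> 'a usl2" is uminus
proof -
  fix x x' :: "'a freealg"
  assume "sl2_rel x x'"
  then have "x - x' \<in> sl2_ideal" by (simp add: sl2_rel_def)
  then have "- (x - x') \<in> sl2_ideal" by (rule sl2_ideal_uminus)
  then show "sl2_rel (- x) (- x')" by (simp add: sl2_rel_def algebra_simps)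
qed
lift_definition minus_usl2 :: "'a usl2 \<Rightarrow> 'a usl2 \<Rightarrow> 'a usl2" is "(-)"
proof -
  fix x x' y y' :: "'a freealg"
  assume "sl2_rel x x'" "sl2_rel y y'"
  then have "(x - x') - (y - y') \<in> sl2_ideal" by (auto simp: sl2_rel_def intro: sl2_ideal_diff)
  then show "sl2_rel (x - y) (x' - y')" by (simp add: sl2_rel_def algebra_simps)
qed
lift_definition times_usl2 :: "'a usl2 \<Rightarrow> 'a usl2 \<Rightarrow> 'a usl2" is "(*)"
proof -
  fix x x' y y' :: "'a freealg"
  assume "sl2_rel x x'" "sl2_rel y y'"
  then have "(x - x') * y \<in> sl2_ideal" "x' * (y - y') \<in> sl2_ideal"
    by (auto simp: sl2_rel_def intro: sl2_ideal_multl sl2_ideal_multr)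
  then have "(x - x') * y + x' * (y - y') \<in> sl2_ideal" by (rule sl2_ideal.add)
  then show "sl2_rel (x * y) (x' * y')"
    by (simp add: sl2_rel_def algebra_simps)
qed
instance
proof
  show "(0::'a usl2) \<noteq> 1"
    using one_notin_sl2_ideal[where 'k='a] by transfer (simp add: sl2_rel_def)
qed (transfer; simp add: algebra_simps)+
end

lift_definition usl2_of :: "'k::comm_ring_1 \<Rightarrow> 'k usl2" is "\<lambda>c. Poly_Mapping.single 0 c" .
lift_definition usl2_H :: "'k::comm_ring_1 usl2" is "fgen GH" .
lift_definition usl2_Xm :: "'k::comm_ring_1 usl2" is "fgen GXm" .
lift_definition usl2_Xp :: "'k::comm_ring_1 usl2" is "fgen GXp" .


text \<open>A k[[h]]-algebra: a unital ring A together with a central unital ring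
  homomorphism \<iota> : k[[h]] \<rightarrow> A (the scalar action is f \<cdot> a = \<iota> f * a).\<close>
definition kh_algebra :: "('k::comm_ring_1 fps \<Rightarrow> 'a::ring_1) \<Rightarrow> bool" where
  "kh_algebra \<iota> \<longleftrightarrow> \<iota> 1 = 1 \<and> (\<forall>f g. \<iota> (f + g) = \<iota> f + \<iota> g) \<and>
     (\<forall>f g. \<iota> (f * g) = \<iota> f * \<iota> g) \<and> (\<forall>f a. \<iota> f * a = a * \<iota> f)"

definition fps_act :: "('k::comm_ring_1 \<Rightarrow> 'v::comm_monoid_add \<Rightarrow> 'v) \<Rightarrow> 'k fps \<Rightarrow> 'v fps \<Rightarrow> 'v fps" where
  "fps_act sc f v = Abs_fps (\<lambda>n. \<Sum>i\<le>n. sc (fps_nth f i) (fps_nth v (n - i)))"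

text \<open>A is topologically free, witnessed by a k-vector space (V0, sc) and a
  k[[h]]-linear bijection \<phi> : V0[[h]] \<rightarrow> A.\<close>
definition top_free_via ::
  "('k::field \<Rightarrow> 'v::ab_group_add \<Rightarrow> 'v) \<Rightarrow> ('v fps \<Rightarrow> 'a::ring_1) \<Rightarrow> ('k fps \<Rightarrow> 'a) \<Rightarrow> bool" where
  "top_free_via sc \<phi> \<iota> \<longleftrightarrow> Vector_Spaces.vector_space sc \<and> bij \<phi> \<and>
     (\<forall>x y. \<phi> (x + y) = \<phi> x + \<phi> y) \<and> (\<forall>f x. \<phi> (fps_act sc f x) = \<iota> f * \<phi> x)"

text \<open>The U_h(a)-algebra structure: images H, X^-, X^+ of the generators,
  satisfying [H, X^+] = 2 X^+ and [H, X^-] = -2 X^-.\<close>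
definition a_relations :: "'a::ring_1 \<Rightarrow> 'a \<Rightarrow> 'a \<Rightarrow> bool" where
  "a_relations H Xm Xp \<longleftrightarrow> H * Xp - Xp * H = 2 * Xp \<and> H * Xm - Xm * H = - (2 * Xm)"

text \<open>An isomorphism A/hA \<cong> U(sl_2) of a-algebras, presented as a surjective
  algebra map \<pi> : A \<rightarrow> U(sl_2) with kernel hA (k = k[[h]]/h acting through the constant term)
  sending H, X^-, X^+ to the Chevalley generators.\<close>
definition reduction_iso ::
  "('k::field fps \<Rightarrow> 'a::ring_1) \<Rightarrow> ('a \<Rightarrow> 'k usl2) \<Rightarrow> 'a \<Rightarrow> 'a \<Rightarrow> 'a \<Rightarrow> bool" where
  "reduction_iso \<iota> \<pi> H Xm Xp \<longleftrightarrow> surj \<pi> \<and> \<pi> 1 = 1 \<and>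
     (\<forall>a b. \<pi> (a + b) = \<pi> a + \<pi> b) \<and> (\<forall>a b. \<pi> (a * b) = \<pi> a * \<pi> b) \<and>
     (\<forall>f a. \<pi> (\<iota> f * a) = usl2_of (fps_nth f 0) * \<pi> a) \<and>
     (\<forall>a. \<pi> a = 0 \<longleftrightarrow> (\<exists>b. a = \<iota> fps_X * b)) \<and>
     \<pi> H = usl2_H \<and> \<pi> Xm = usl2_Xm \<and> \<pi> Xp = usl2_Xp"

definition formal_deformation ::
  "('k::field \<Rightarrow> 'v::ab_group_add \<Rightarrow> 'v) \<Rightarrow> ('v fps \<Rightarrow> 'a::ring_1) \<Rightarrow> ('k fps \<Rightarrow> 'a) \<Rightarrow> 'a \<Rightarrow> 'a \<Rightarrow> 'a \<Rightarrow> bool" where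
  "formal_deformation sc \<phi> \<iota> H Xm Xp \<longleftrightarrow> kh_algebra \<iota> \<and> top_free_via sc \<phi> \<iota> \<and>
     a_relations H Xm Xp \<and> (\<exists>\<pi>. reduction_iso \<iota> \<pi> H Xm Xp)"

definition kh_scal :: "'k::comm_ring_1 fps \<Rightarrow> 'k usl2 fps" where
  "kh_scal f = Abs_fps (\<lambda>n. usl2_of (fps_nth f n))"

definition kh_alg_iso :: "('k::field fps \<Rightarrow> 'a::ring_1) \<Rightarrow> ('k usl2 fps \<Rightarrow> 'a) \<Rightarrow> bool" where
  "kh_alg_iso \<iota> g \<longleftrightarrow> bij g \<and> g 1 = 1 \<and> (\<forall>x y. g (x + y) = g x + g y) \<and>
     (\<forall>x y. g (x * y) = g x * g y) \<and> (\<forall>f x. g (kh_scal f * x) = \<iota> f * g x)"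

definition modh :: "('k::comm_ring_1 fps \<Rightarrow> 'a::ring_1) \<Rightarrow> 'a \<Rightarrow> 'a \<Rightarrow> bool" where
  "modh \<iota> a b \<longleftrightarrow> (\<exists>c. a - b = \<iota> fps_X * c)"

text \<open>The reduction gbar : U(sl_2) \<rightarrow> A/hA, u \<mapsto> [g(u)], is an isomorphism of
  a-algebras (k-algebra isomorphism sending H, X^-, X^+ to the classes of H, X^-, X^+ in A).\<close>
definition bar_a_iso ::
  "('k::field fps \<Rightarrow> 'a::ring_1) \<Rightarrow> ('k usl2 fps \<Rightarrow> 'a) \<Rightarrow> 'a \<Rightarrow> 'a \<Rightarrow> 'a \<Rightarrow> bool" where
  "bar_a_iso \<iota> g H Xm Xp \<longleftrightarrow>
     modh \<iota> (g (fps_const 1)) 1 \<and>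
     (\<forall>u v. modh \<iota> (g (fps_const (u + v))) (g (fps_const u) + g (fps_const v))) \<and>
     (\<forall>u v. modh \<iota> (g (fps_const (u * v))) (g (fps_const u) * g (fps_const v))) \<and>
     (\<forall>c u. modh \<iota> (g (fps_const (usl2_of c * u))) (\<iota> (fps_const c) * g (fps_const u))) \<and>
     (\<forall>u. modh \<iota> (g (fps_const u)) 0 \<longrightarrow> u = 0) \<and>
     (\<forall>a. \<exists>u. modh \<iota> a (g (fps_const u))) \<and>
     modh \<iota> (g (fps_const usl2_H)) H \<and> modh \<iota> (g (fps_const usl2_Xm)) Xm \<and>
     modh \<iota> (g (fps_const usl2_Xp)) Xp"

definition h_trivial :: "('k::field fps \<Rightarrow> 'a::ring_1) \<Rightarrow> 'a \<Rightarrow> 'a \<Rightarrow> 'a \<Rightarrow> bool" where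
  "h_trivial \<iota> H Xm Xp \<longleftrightarrow>
     (\<exists>g. kh_alg_iso \<iota> g \<and> g (fps_const usl2_H) = H \<and> bar_a_iso \<iota> g H Xm Xp)"

end

theory Submission
  imports Defs
begin

text \<open>Let Y be the preimage of X^- under the given h-trivialization g0. Its coefficients have
  ad H-weight -2, so Y = X^- q with q of weight 0 and q = 1 mod h; then H, Y and q^-1 X^+ again
  satisfy the relations of sl_2. The induced map U(sl_2) \<rightarrow> U(sl_2)[[h]] extends h-linearly to an
  automorphism of U(sl_2)[[h]] that is the identity mod h, and composing it with g0 gives g.

  Two such isomorphisms differ by an automorphism fixing H and X^-. It must also fix X^+: the
  coefficients of the difference of X^+ and its image have weight 2 and are killed by ad X^-, and
  since ad X^+ is locally nilpotent there are no such lowest weight vectors in characteristic 0.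
  An h-linear automorphism fixing U(sl_2) is the identity.\<close>

unbundle fps_syntax

lemma usl2_of_1 [simp]: "usl2_of 1 = (1::'k::comm_ring_1 usl2)"
  by transfer (simp add: one_poly_mapping_def)

lemma usl2_of_0 [simp]: "usl2_of 0 = (0::'k::comm_ring_1 usl2)"
  by transfer simp

lemma usl2_of_add: "usl2_of (a + b) = (usl2_of a + usl2_of b :: 'k::comm_ring_1 usl2)"
  by transfer (simp add: single_add)

lemma usl2_of_mult: "usl2_of (a * b) = (usl2_of a * usl2_of b :: 'k::comm_ring_1 usl2)"
  by transfer (simp add: mult_single)

lemma usl2_of_diff: "usl2_of (a - b) = (usl2_of a - usl2_of b :: 'k::comm_ring_1 usl2)"
  by transfer (simp add: single_diff)

lemma usl2_of_uminus: "usl2_of (- b) = (- usl2_of b :: 'k::comm_ring_1 usl2)"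
  by transfer (simp add: single_uminus)

lemma usl2_of_of_nat: "usl2_of (of_nat n) = (of_nat n :: 'k::comm_ring_1 usl2)"
  by (induction n) (simp_all add: usl2_of_add)

lemma usl2_of_of_int: "usl2_of (of_int n) = (of_int n :: 'k::comm_ring_1 usl2)"
  by (cases n) (simp_all add: usl2_of_of_nat usl2_of_uminus usl2_of_diff)

lemma poly_mapping_sum_single:
  "p = (\<Sum>w\<in>Poly_Mapping.keys p. Poly_Mapping.single w (Poly_Mapping.lookup p w))"
proof (rule poly_mapping_eqI)
  fix k
  have "Poly_Mapping.lookup p k
      = (\<Sum>x\<in>Poly_Mapping.keys p. if k = x then Poly_Mapping.lookup p x else 0)"
    by (subst sum.delta') (auto simp: in_keys_iff)
  then show "Poly_Mapping.lookup p k = Poly_Mapping.lookup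
      (\<Sum>w\<in>Poly_Mapping.keys p. Poly_Mapping.single w (Poly_Mapping.lookup p w)) k"
    by (simp add: lookup_sum lookup_single when_def)
qed

lemma abs_usl2_add: "abs_usl2 (p + q) = abs_usl2 p + abs_usl2 q"
  by (simp add: plus_usl2.abs_eq)

lemma abs_usl2_diff: "abs_usl2 (p - q) = abs_usl2 p - abs_usl2 q"
  by (simp add: minus_usl2.abs_eq)

lemma abs_usl2_mult: "abs_usl2 (p * q) = abs_usl2 p * abs_usl2 q"
  by (simp add: times_usl2.abs_eq)

lemma abs_usl2_0: "abs_usl2 0 = 0"
  by (simp add: zero_usl2.abs_eq)

lemma abs_usl2_1: "abs_usl2 1 = 1"
  by (simp add: one_usl2.abs_eq)

lemma abs_usl2_2: "abs_usl2 2 = 2"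
  by (metis one_add_one abs_usl2_add abs_usl2_1)

lemma abs_usl2_sum: "abs_usl2 (sum f S) = (\<Sum>x\<in>S. abs_usl2 (f x))"
  by (induction S rule: infinite_finite_induct) (auto simp: abs_usl2_add abs_usl2_0)

lemma abs_usl2_surj: "\<exists>p. u = abs_usl2 p"
  by (induct u rule: usl2.abs_induct) auto

fun usl2_gen :: "gen \<Rightarrow> 'k::comm_ring_1 usl2" where
  "usl2_gen GH = usl2_H" | "usl2_gen GXm = usl2_Xm" | "usl2_gen GXp = usl2_Xp"

fun letters :: "word \<Rightarrow> gen list" where
  "letters (Word l) = l"

lemma letters_plus: "letters (w + v) = letters w @ letters v"
  by (cases w; cases v) simp

lemma inj_letters: "inj letters"
  by (rule injI) (metis letters.simps word.exhaust)

fun monom :: "(gen \<Rightarrow> 'r::monoid_mult) \<Rightarrow> gen list \<Rightarrow> 'r" where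
  "monom e [] = 1" | "monom e (x # l) = e x * monom e l"

lemma monom_append: "monom e (l @ m) = monom e l * monom e m"
  by (induction l) (simp_all add: mult.assoc)

abbreviation usl2_monom :: "gen list \<Rightarrow> 'k::comm_ring_1 usl2" where
  "usl2_monom \<equiv> monom usl2_gen"

lemma abs_usl2_fgen: "abs_usl2 (fgen x) = usl2_gen x"
  by (cases x) (simp_all add: usl2_H.abs_eq usl2_Xm.abs_eq usl2_Xp.abs_eq)

lemma usl2_of_gen_commute: "usl2_of c * usl2_gen x = usl2_gen x * usl2_of c"
  by (cases x; simp; transfer; simp add: mult_single zero_word_def fgen_def)

lemma abs_usl2_single:
  "abs_usl2 (Poly_Mapping.single (Word l) c) = usl2_of c * usl2_monom l"
proof (induction l)
  case Nil
  then show ?case by (simp add: zero_word_def[symmetric] usl2_of.abs_eq)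
next
  case (Cons x l)
  have "Poly_Mapping.single (Word (x # l)) c = fgen x * Poly_Mapping.single (Word l) c"
    by (simp add: fgen_def mult_single)
  with Cons show ?case
    by (simp add: abs_usl2_mult abs_usl2_fgen usl2_of_gen_commute mult.assoc[symmetric])
qed

lemma usl2_monom_span: "\<exists>S c. finite S \<and> u = (\<Sum>l\<in>S. usl2_of (c l) * usl2_monom l)"
proof -
  obtain p where u: "u = abs_usl2 p"
    using abs_usl2_surj by blast
  have "u = (\<Sum>w\<in>Poly_Mapping.keys p. abs_usl2 (Poly_Mapping.single w (Poly_Mapping.lookup p w)))"
    by (subst u, subst poly_mapping_sum_single) (simp add: abs_usl2_sum)
  also have "\<dots> = (\<Sum>w\<in>Poly_Mapping.keys p.
      usl2_of (Poly_Mapping.lookup p (Word (letters w))) * usl2_monom (letters w))"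
    by (rule sum.cong, simp) (metis abs_usl2_single letters.simps word.exhaust)
  also have "\<dots> = (\<Sum>l\<in>letters ` Poly_Mapping.keys p.
      usl2_of (Poly_Mapping.lookup p (Word l)) * usl2_monom l)"
    using inj_letters by (subst sum.reindex) (auto intro: inj_on_subset)
  finally show ?thesis
    by (intro exI[of _ "letters ` Poly_Mapping.keys p"] exI) simp
qed

lemma usl2_of_monom_commute: "usl2_of c * usl2_monom l = usl2_monom l * usl2_of c"
  by (induction l) (simp_all add: mult.assoc[symmetric] usl2_of_gen_commute, simp add: mult.assoc)

lemma usl2_of_central: "usl2_of c * u = u * usl2_of c"
proof -
  obtain S d where u: "u = (\<Sum>l\<in>S. usl2_of (d l) * usl2_monom l)"
    using usl2_monom_span by blast
  have "usl2_of c * (usl2_of a * usl2_monom l) = usl2_of a * usl2_monom l * usl2_of c" for a l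
  proof -
    have "usl2_of c * usl2_of a = usl2_of a * usl2_of c"
      by (metis usl2_of_mult mult.commute)
    then show ?thesis
      by (metis mult.assoc usl2_of_monom_commute)
  qed
  then show ?thesis
    unfolding u sum_distrib_left sum_distrib_right by simp
qed

lemma abs_usl2_sl2_rels: "r \<in> sl2_rels \<Longrightarrow> abs_usl2 r = 0"
proof -
  assume "r \<in> sl2_rels"
  then have "1 * r * 1 \<in> sl2_ideal"
    by (rule sl2_ideal.gen)
  then show "abs_usl2 r = 0"
    by (simp add: usl2.abs_eq_iff abs_usl2_0[symmetric] sl2_rel_def)
qed

lemma usl2_comm_H_Xp: "usl2_H * usl2_Xp - usl2_Xp * usl2_H = (2::'k::comm_ring_1 usl2) * usl2_Xp"
  using abs_usl2_sl2_rels[of "(fgen GH::'k freealg) * fgen GXp - fgen GXp * fgen GH - 2 * fgen GXp"]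
  by (simp add: sl2_rels_def abs_usl2_diff abs_usl2_mult abs_usl2_fgen abs_usl2_2)

lemma usl2_comm_H_Xm: "usl2_H * usl2_Xm - usl2_Xm * usl2_H = - ((2::'k::comm_ring_1 usl2) * usl2_Xm)"
  using abs_usl2_sl2_rels[of "(fgen GH::'k freealg) * fgen GXm - fgen GXm * fgen GH + 2 * fgen GXm"]
  by (simp add: sl2_rels_def abs_usl2_diff abs_usl2_mult abs_usl2_fgen abs_usl2_2 abs_usl2_add
      eq_neg_iff_add_eq_0)

lemma usl2_comm_Xp_Xm: "usl2_Xp * usl2_Xm - usl2_Xm * usl2_Xp = (usl2_H::'k::comm_ring_1 usl2)"
  using abs_usl2_sl2_rels[of "(fgen GXp::'k freealg) * fgen GXm - fgen GXm * fgen GXp - fgen GH"]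
  by (simp add: sl2_rels_def abs_usl2_diff abs_usl2_mult abs_usl2_fgen)

subsection \<open>The universal property of U(sl_2)\<close>

definition usl2_alg_hom :: "('k::comm_ring_1 \<Rightarrow> 'r::ring_1) \<Rightarrow> ('k usl2 \<Rightarrow> 'r) \<Rightarrow> bool" where
  "usl2_alg_hom \<sigma> h \<longleftrightarrow> h 1 = 1 \<and> (\<forall>a b. h (a + b) = h a + h b) \<and> (\<forall>a b. h (a * b) = h a * h b) \<and>
     (\<forall>c u. h (usl2_of c * u) = \<sigma> c * h u)"

definition central_ring_hom :: "('k::comm_ring_1 \<Rightarrow> 'r::ring_1) \<Rightarrow> bool" where
  "central_ring_hom \<sigma> \<longleftrightarrow> \<sigma> 1 = 1 \<and> (\<forall>a b. \<sigma> (a + b) = \<sigma> a + \<sigma> b) \<and>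
     (\<forall>a b. \<sigma> (a * b) = \<sigma> a * \<sigma> b) \<and> (\<forall>c x. \<sigma> c * x = x * \<sigma> c)"

definition sl2_triple :: "(gen \<Rightarrow> 'r::ring_1) \<Rightarrow> bool" where
  "sl2_triple e \<longleftrightarrow> e GH * e GXp - e GXp * e GH = 2 * e GXp \<and>
     e GH * e GXm - e GXm * e GH = - (2 * e GXm) \<and> e GXp * e GXm - e GXm * e GXp = e GH"

definition free_eval :: "('k::comm_ring_1 \<Rightarrow> 'r::ring_1) \<Rightarrow> (gen \<Rightarrow> 'r) \<Rightarrow> 'k freealg \<Rightarrow> 'r" where
  "free_eval \<sigma> e p = (\<Sum>w\<in>Poly_Mapping.keys p. \<sigma> (Poly_Mapping.lookup p w) * monom e (letters w))"

context
  fixes \<sigma> :: "'k::comm_ring_1 \<Rightarrow> 'r::ring_1" and e :: "gen \<Rightarrow> 'r"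
  assumes \<sigma>: "central_ring_hom \<sigma>"
begin

lemma central_ring_hom_0: "\<sigma> 0 = 0"
  using \<sigma> add_cancel_right_right unfolding central_ring_hom_def by metis

lemma free_eval_superset:
  "finite K \<Longrightarrow> Poly_Mapping.keys p \<subseteq> K \<Longrightarrow>
    free_eval \<sigma> e p = (\<Sum>w\<in>K. \<sigma> (Poly_Mapping.lookup p w) * monom e (letters w))"
  unfolding free_eval_def
  by (rule sum.mono_neutral_left) (auto simp: in_keys_iff central_ring_hom_0)

lemma free_eval_add: "free_eval \<sigma> e (p + q) = free_eval \<sigma> e p + free_eval \<sigma> e q"
proof -
  let ?K = "Poly_Mapping.keys p \<union> Poly_Mapping.keys q"
  let ?t = "\<lambda>r w. \<sigma> (Poly_Mapping.lookup r w) * monom e (letters w)"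
  have K: "finite ?K" "Poly_Mapping.keys (p + q) \<subseteq> ?K"
    by (simp_all add: keys_add)
  have "free_eval \<sigma> e (p + q) = (\<Sum>w\<in>?K. ?t (p + q) w)"
    using K by (rule free_eval_superset)
  also have "\<dots> = (\<Sum>w\<in>?K. ?t p w) + (\<Sum>w\<in>?K. ?t q w)"
    using \<sigma> by (simp add: lookup_add central_ring_hom_def distrib_right sum.distrib)
  also have "\<dots> = free_eval \<sigma> e p + free_eval \<sigma> e q"
    using K(1) free_eval_superset[of ?K p] free_eval_superset[of ?K q] by auto
  finally show ?thesis .
qed

lemma free_eval_0: "free_eval \<sigma> e 0 = 0"
  by (simp add: free_eval_def)

lemma free_eval_sum: "free_eval \<sigma> e (sum f S) = (\<Sum>x\<in>S. free_eval \<sigma> e (f x))"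
  by (induction S rule: infinite_finite_induct) (auto simp: free_eval_add free_eval_0)

lemma free_eval_diff: "free_eval \<sigma> e (p - q) = free_eval \<sigma> e p - free_eval \<sigma> e q"
  using free_eval_add[of "p - q" q] by (simp add: algebra_simps)

lemma free_eval_single:
  "free_eval \<sigma> e (Poly_Mapping.single w a) = \<sigma> a * monom e (letters w)"
  by (cases "a = 0") (simp_all add: free_eval_def central_ring_hom_0)

lemma free_eval_mult_single:
  "free_eval \<sigma> e (Poly_Mapping.single w a * Poly_Mapping.single v b) =
    free_eval \<sigma> e (Poly_Mapping.single w a) * free_eval \<sigma> e (Poly_Mapping.single v b)"
proof -
  have "\<sigma> (a * b) * (monom e (letters w) * monom e (letters v))
      = \<sigma> a * monom e (letters w) * (\<sigma> b * monom e (letters v))"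
    using \<sigma> unfolding central_ring_hom_def by (metis mult.assoc)
  then show ?thesis
    by (simp add: mult_single free_eval_single letters_plus monom_append)
qed

lemma free_eval_mult: "free_eval \<sigma> e (p * q) = free_eval \<sigma> e p * free_eval \<sigma> e q"
proof -
  let ?s = "\<lambda>r w. Poly_Mapping.single w (Poly_Mapping.lookup r w)"
  have "p * q = (\<Sum>v\<in>Poly_Mapping.keys q. \<Sum>w\<in>Poly_Mapping.keys p. ?s p w * ?s q v)"
    by (subst poly_mapping_sum_single[of p], subst poly_mapping_sum_single[of q])
      (simp add: sum_distrib_left sum_distrib_right)
  then have "free_eval \<sigma> e (p * q) = (\<Sum>v\<in>Poly_Mapping.keys q. \<Sum>w\<in>Poly_Mapping.keys p.
      free_eval \<sigma> e (?s p w) * free_eval \<sigma> e (?s q v))"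
    by (simp add: free_eval_sum free_eval_mult_single)
  also have "\<dots> = free_eval \<sigma> e p * free_eval \<sigma> e q"
    by (subst (3) poly_mapping_sum_single[of p], subst (3) poly_mapping_sum_single[of q])
      (simp add: free_eval_sum sum_distrib_left sum_distrib_right sum.swap[of _ "Poly_Mapping.keys p"])
  finally show ?thesis .
qed

lemma free_eval_1: "free_eval \<sigma> e 1 = 1"
proof -
  have "letters 0 = []"
    by (simp add: zero_word_def)
  then show ?thesis
    using \<sigma> free_eval_single[of 0 1] by (simp add: central_ring_hom_def)
qed

lemma free_eval_fgen: "free_eval \<sigma> e (fgen x) = e x"
  using \<sigma> by (simp add: fgen_def free_eval_single central_ring_hom_def)

lemma free_eval_sl2_ideal:
  assumes "sl2_triple e" and "x \<in> sl2_ideal"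
  shows "free_eval \<sigma> e x = 0"
  using assms(2)
proof (induction rule: sl2_ideal.induct)
  case zero
  then show ?case by (simp add: free_eval_0)
next
  case (gen r a b)
  have "free_eval \<sigma> e 2 = 2"
    by (metis free_eval_add free_eval_1 one_add_one)
  with gen assms(1) have "free_eval \<sigma> e r = 0"
    by (auto simp: sl2_rels_def sl2_triple_def free_eval_diff free_eval_add free_eval_mult
        free_eval_fgen)
  then show ?case by (simp add: free_eval_mult)
next
  case (add x y)
  then show ?case by (simp add: free_eval_add)
qed

end

definition usl2_lift :: "('k::comm_ring_1 \<Rightarrow> 'r::ring_1) \<Rightarrow> (gen \<Rightarrow> 'r) \<Rightarrow> 'k usl2 \<Rightarrow> 'r" where
  "usl2_lift \<sigma> e u = free_eval \<sigma> e (rep_usl2 u)"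

lemma usl2_lift_abs:
  assumes "central_ring_hom \<sigma>" and "sl2_triple e"
  shows "usl2_lift \<sigma> e (abs_usl2 p) = free_eval \<sigma> e p"
proof -
  have "sl2_rel (rep_usl2 (abs_usl2 p)) p"
    by (metis Quotient3_rep_abs Quotient3_usl2 equivp_sl2_rel equivp_symp sl2_rel_refl)
  then have "free_eval \<sigma> e (rep_usl2 (abs_usl2 p) - p) = 0"
    using free_eval_sl2_ideal[OF assms] by (simp add: sl2_rel_def)
  then show ?thesis
    using free_eval_diff[OF assms(1)] by (simp add: usl2_lift_def)
qed

lemma usl2_lift:
  assumes \<sigma>: "central_ring_hom \<sigma>" and e: "sl2_triple e"
  shows "usl2_alg_hom \<sigma> (usl2_lift \<sigma> e)" and "usl2_lift \<sigma> e (usl2_gen x) = e x"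
proof -
  note abs = usl2_lift_abs[OF \<sigma> e]
  show "usl2_lift \<sigma> e (usl2_gen x) = e x"
    using abs free_eval_fgen[OF \<sigma>] abs_usl2_fgen by metis
  show "usl2_alg_hom \<sigma> (usl2_lift \<sigma> e)"
    unfolding usl2_alg_hom_def
  proof (intro conjI allI)
    show "usl2_lift \<sigma> e 1 = 1"
      using abs free_eval_1[OF \<sigma>] abs_usl2_1 by metis
    fix a b :: "'a usl2"
    obtain p q where "a = abs_usl2 p" "b = abs_usl2 q"
      using abs_usl2_surj by metis
    then show "usl2_lift \<sigma> e (a + b) = usl2_lift \<sigma> e a + usl2_lift \<sigma> e b"
      and "usl2_lift \<sigma> e (a * b) = usl2_lift \<sigma> e a * usl2_lift \<sigma> e b"
      using abs free_eval_add[OF \<sigma>] free_eval_mult[OF \<sigma>] abs_usl2_add abs_usl2_mult by metis+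
  next
    fix c and u :: "'a usl2"
    obtain p where "u = abs_usl2 p"
      using abs_usl2_surj by metis
    then show "usl2_lift \<sigma> e (usl2_of c * u) = \<sigma> c * usl2_lift \<sigma> e u"
      using abs free_eval_mult[OF \<sigma>] abs_usl2_mult usl2_of.abs_eq
        free_eval_single[OF \<sigma>, where w=0 and a=c]
      by (metis monom.simps(1) mult_1_right letters.simps zero_word_def)
  qed
qed

lemma usl2_alg_hom_0: "usl2_alg_hom \<sigma> h \<Longrightarrow> h 0 = 0"
  unfolding usl2_alg_hom_def by (metis add_0 add_cancel_right_right)

lemma usl2_alg_hom_sum: "usl2_alg_hom \<sigma> h \<Longrightarrow> h (sum f S) = (\<Sum>x\<in>S. h (f x))"
  by (induction S rule: infinite_finite_induct)
    (auto simp: usl2_alg_hom_0, simp add: usl2_alg_hom_def)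

lemma usl2_alg_hom_of: "usl2_alg_hom \<sigma> h \<Longrightarrow> h (usl2_of c) = \<sigma> c"
  unfolding usl2_alg_hom_def by (metis mult_1_right)

lemma usl2_alg_hom_eqI:
  fixes h1 h2 :: "'k::comm_ring_1 usl2 \<Rightarrow> 'r::ring_1"
  assumes h1: "usl2_alg_hom \<sigma> h1" and h2: "usl2_alg_hom \<sigma> h2"
    and gen: "\<And>x. h1 (usl2_gen x) = h2 (usl2_gen x)"
  shows "h1 = h2"
proof
  fix u :: "'k usl2"
  have monom: "h1 (usl2_monom l) = h2 (usl2_monom l)" for l
    by (induction l) (use h1 h2 gen in \<open>simp_all add: usl2_alg_hom_def\<close>)
  have monom_term: "h1 (usl2_of c * usl2_monom l) = h2 (usl2_of c * usl2_monom l)" for c l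
    using h1 h2 monom unfolding usl2_alg_hom_def by metis
  obtain S c where "u = (\<Sum>l\<in>S. usl2_of (c l) * usl2_monom l)"
    using usl2_monom_span by blast
  then show "h1 u = h2 u"
    by (simp add: usl2_alg_hom_sum[OF h1] usl2_alg_hom_sum[OF h2] monom_term)
qed

definition ad :: "'a::ring_1 \<Rightarrow> 'a \<Rightarrow> 'a" where
  "ad a x = a * x - x * a"

lemma ad_add: "ad a (x + y) = ad a x + ad a y"
  by (simp add: ad_def algebra_simps)

lemma ad_diff: "ad a (x - y) = ad a x - ad a y"
  by (simp add: ad_def algebra_simps)

lemma ad_uminus: "ad a (- x) = - ad a x"
  by (simp add: ad_def algebra_simps)

lemma ad_left_add: "ad (a + b) x = ad a x + ad b x"
  by (simp add: ad_def algebra_simps)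

lemma ad_left_uminus: "ad (- a) x = - ad a x"
  by (simp add: ad_def algebra_simps)

lemma ad_0 [simp]: "ad a 0 = 0"
  by (simp add: ad_def)

lemma ad_1 [simp]: "ad a 1 = 0"
  by (simp add: ad_def)

lemma ad_sum: "ad a (sum f S) = (\<Sum>x\<in>S. ad a (f x))"
  by (induction S rule: infinite_finite_induct) (simp_all add: ad_add)

lemma ad_mult: "ad a (x * y) = ad a x * y + x * ad a y"
  by (simp add: ad_def algebra_simps)

lemma ad_mult_commuting: "a * c = c * a \<Longrightarrow> ad a (c * x) = c * ad a x"
  by (simp add: ad_def right_diff_distrib mult.assoc[symmetric])

lemma ad_of_nat: "ad a (of_nat n * x) = of_nat n * ad a x"
  by (rule ad_mult_commuting) (simp add: mult_of_nat_commute)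

lemma ad_of_int: "ad a (of_int n * x) = of_int n * ad a x"
  by (rule ad_mult_commuting) (simp add: mult_of_int_commute)

lemma ad_usl2_of: "ad a (usl2_of c * x) = usl2_of c * ad a x"
  by (rule ad_mult_commuting) (simp add: usl2_of_central)

lemma ad_jacobi: "ad a (ad b x) = ad b (ad a x) + ad (ad a b) x"
  by (simp add: ad_def algebra_simps)

lemma ad_power_add: "(ad a ^^ n) (x + y) = (ad a ^^ n) x + (ad a ^^ n) y"
  by (induction n) (simp_all add: ad_add)

lemma ad_power_0 [simp]: "(ad a ^^ n) 0 = 0"
  by (induction n) simp_all

lemma ad_power_sum: "(ad a ^^ n) (sum f S) = (\<Sum>x\<in>S. (ad a ^^ n) (f x))"
  by (induction S rule: infinite_finite_induct) (simp_all add: ad_power_add)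

lemma ad_power_usl2_of: "(ad a ^^ n) (usl2_of c * x) = usl2_of c * (ad a ^^ n) x"
  by (induction n) (simp_all add: ad_usl2_of)

lemma ad_power_mono:
  assumes "(ad a ^^ m) x = 0" and "m \<le> n"
  shows "(ad a ^^ n) x = 0"
proof -
  have "ad a ^^ n = ad a ^^ (n - m) \<circ> ad a ^^ m"
    using assms(2) by (simp add: funpow_add[symmetric])
  then show ?thesis
    by (simp add: assms(1))
qed

lemma ad_power_mult_eq_0:
  "i + j = n \<Longrightarrow> (ad a ^^ i) x = 0 \<Longrightarrow> (ad a ^^ j) y = 0 \<Longrightarrow> (ad a ^^ n) (x * y) = 0"
proof (induction n arbitrary: i j x y)
  case (Suc n)
  have "(ad a ^^ Suc n) (x * y) = (ad a ^^ n) (ad a x * y) + (ad a ^^ n) (x * ad a y)"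
    by (simp add: funpow_Suc_right ad_mult ad_power_add del: funpow.simps)
  moreover have "(ad a ^^ n) (ad a x * y) = 0"
  proof (cases i)
    case (Suc i')
    then show ?thesis
      using Suc.IH[of i' j "ad a x" y] Suc.prems by (simp add: funpow_Suc_right del: funpow.simps)
  qed (use Suc.prems in simp)
  moreover have "(ad a ^^ n) (x * ad a y) = 0"
  proof (cases j)
    case (Suc j')
    then show ?thesis
      using Suc.IH[of i j' x "ad a y"] Suc.prems by (simp add: funpow_Suc_right del: funpow.simps)
  qed (use Suc.prems in simp)
  ultimately show ?case by simp
qed simp

lemma usl2_of_cancel:
  fixes d :: "'k::field"
  assumes "d \<noteq> 0" "usl2_of d * x = usl2_of d * y"
  shows "x = y"
proof -
  have "usl2_of (inverse d) * (usl2_of d * x) = usl2_of (inverse d) * (usl2_of d * y)"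
    using assms by simp
  then show ?thesis
    using assms(1) by (simp add: mult.assoc[symmetric] usl2_of_mult[symmetric])
qed

lemma usl2_of_int_cancel:
  assumes "(n::int) \<noteq> 0" "of_int n * x = (of_int n * y :: 'k::field_char_0 usl2)"
  shows "x = y"
  using usl2_of_cancel[of "of_int n :: 'k"] assms by (simp add: usl2_of_of_int)

subsection \<open>Weights of monomials\<close>

fun gen_weight :: "gen \<Rightarrow> int" where
  "gen_weight GH = 0" | "gen_weight GXm = -2" | "gen_weight GXp = 2"

definition weight :: "gen list \<Rightarrow> int" where
  "weight l = sum_list (map gen_weight l)"

lemma weight_simps [simp]: "weight [] = 0" "weight (x # l) = gen_weight x + weight l"
  by (simp_all add: weight_def)

lemma weight_append [simp]: "weight (l @ m) = weight l + weight m"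
  by (simp add: weight_def)

lemma weight_nonneg_if_no_Xm: "GXm \<notin> set l \<Longrightarrow> weight l \<ge> 0"
proof (induction l)
  case (Cons x l)
  then show ?case by (cases x) auto
qed simp

lemma ad_H_gen: "ad usl2_H (usl2_gen x) = of_int (gen_weight x) * (usl2_gen x :: 'k::comm_ring_1 usl2)"
  using usl2_comm_H_Xp[where 'k='k] usl2_comm_H_Xm[where 'k='k]
  by (cases x) (simp_all add: ad_def)

lemma ad_H_monom: "ad usl2_H (usl2_monom l) = of_int (weight l) * (usl2_monom l :: 'k::comm_ring_1 usl2)"
proof (induction l)
  case (Cons x l)
  have "ad usl2_H (usl2_monom (x # l) :: 'k usl2)
      = of_int (gen_weight x) * usl2_gen x * usl2_monom l + usl2_gen x * (of_int (weight l) * usl2_monom l)"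
    by (simp add: ad_mult ad_H_gen Cons.IH)
  also have "\<dots> = of_int (gen_weight x) * usl2_monom (x # l) + of_int (weight l) * usl2_monom (x # l)"
    using mult_of_int_commute[of "weight l" "usl2_gen x :: 'k usl2"]
    by (simp add: mult.assoc[symmetric])
  finally show ?case
    by (simp add: distrib_right)
qed (simp add: ad_def)

lemma ad_H_monom_shift:
  "ad usl2_H (usl2_of c * usl2_monom l) - of_int w * (usl2_of c * usl2_monom l)
    = usl2_of (c * of_int (weight l - w)) * (usl2_monom l :: 'k::comm_ring_1 usl2)"
proof -
  have "ad usl2_H (usl2_of c * usl2_monom l) - of_int w * (usl2_of c * usl2_monom l)
      = usl2_of (c * of_int (weight l)) * usl2_monom l - usl2_of (of_int w * c) * (usl2_monom l :: 'k usl2)"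
    by (simp only: ad_usl2_of ad_H_monom usl2_of_mult usl2_of_of_int mult.assoc)
  also have "\<dots> = usl2_of (c * of_int (weight l - w)) * usl2_monom l"
    by (simp only: left_diff_distrib[symmetric] usl2_of_diff[symmetric]) (simp add: algebra_simps)
  finally show ?thesis .
qed

lemma ad_H_span_shift:
  fixes c :: "gen list \<Rightarrow> 'k::comm_ring_1"
  shows "ad usl2_H (\<Sum>l\<in>S. usl2_of (c l) * usl2_monom l) - of_int w * (\<Sum>l\<in>S. usl2_of (c l) * usl2_monom l)
    = (\<Sum>l\<in>S. usl2_of (c l * of_int (weight l - w)) * usl2_monom l)"
  by (simp add: ad_sum sum_distrib_left sum_subtractf[symmetric] ad_H_monom_shift)

text \<open>The weights other than lam are removed one at a time by applying ad H - w, which only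
  rescales the weight lam part by the invertible factor lam - w.\<close>
lemma ad_H_eigenvector_weight_support:
  fixes c :: "gen list \<Rightarrow> 'k::field_char_0"
  assumes "finite S"
    and "ad usl2_H (\<Sum>l\<in>S. usl2_of (c l) * usl2_monom l) = of_int lam * (\<Sum>l\<in>S. usl2_of (c l) * usl2_monom l)"
  shows "(\<Sum>l\<in>S. usl2_of (c l) * usl2_monom l) = (\<Sum>l\<in>{l\<in>S. weight l = lam}. usl2_of (c l) * usl2_monom l)"
proof -
  have "finite W \<Longrightarrow> weight ` S \<subseteq> insert lam W \<Longrightarrow> finite S \<Longrightarrow>
      ad usl2_H (\<Sum>l\<in>S. usl2_of (c l) * usl2_monom l) = of_int lam * (\<Sum>l\<in>S. usl2_of (c l) * usl2_monom l) \<Longrightarrow>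
      (\<Sum>l\<in>S. usl2_of (c l) * usl2_monom l) = (\<Sum>l\<in>{l\<in>S. weight l = lam}. usl2_of (c l) * usl2_monom l)"
    for W and S and c :: "gen list \<Rightarrow> 'k"
  proof (induction W arbitrary: S c rule: finite_induct)
    case empty
    then have "{l\<in>S. weight l = lam} = S" by auto
    then show ?case by simp
  next
    case (insert w W S c)
    show ?case
    proof (cases "w = lam")
      case True
      then show ?thesis
        using insert.IH[of S c] insert.prems by auto
    next
      case False
      define u where "u = (\<Sum>l\<in>S. usl2_of (c l) * usl2_monom l)"
      define c' where "c' l = c l * of_int (weight l - w)" for l
      define S' where "S' = {l\<in>S. weight l \<noteq> w}"
      have "ad usl2_H u - of_int w * u = (\<Sum>l\<in>S. usl2_of (c' l) * usl2_monom l)"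
        unfolding u_def c'_def by (rule ad_H_span_shift)
      also have "\<dots> = (\<Sum>l\<in>S'. usl2_of (c' l) * usl2_monom l)"
        by (rule sum.mono_neutral_right) (auto simp: S'_def c'_def insert.prems)
      finally have S'_sum: "(\<Sum>l\<in>S'. usl2_of (c' l) * usl2_monom l) = of_int (lam - w) * u"
        using insert.prems(3) by (simp add: u_def algebra_simps)
      have "ad usl2_H (\<Sum>l\<in>S'. usl2_of (c' l) * usl2_monom l)
          = of_int lam * (\<Sum>l\<in>S'. usl2_of (c' l) * usl2_monom l)"
      proof -
        have "ad usl2_H u = of_int lam * u"
          using insert.prems(3) by (simp add: u_def)
        moreover have "of_int (lam - w) * of_int lam = (of_int lam * of_int (lam - w) :: 'k usl2)"
          by (rule mult_of_int_commute)
        ultimately show ?thesis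
          unfolding S'_sum ad_of_int by (simp only: mult.assoc[symmetric])
      qed
      moreover have "finite S'" "weight ` S' \<subseteq> insert lam W"
        using insert.prems by (auto simp: S'_def)
      ultimately have "(\<Sum>l\<in>S'. usl2_of (c' l) * usl2_monom l)
          = (\<Sum>l\<in>{l\<in>S'. weight l = lam}. usl2_of (c' l) * usl2_monom l)"
        using insert.IH by blast
      also have "{l\<in>S'. weight l = lam} = {l\<in>S. weight l = lam}"
        using False by (auto simp: S'_def)
      also have "(\<Sum>l\<in>{l\<in>S. weight l = lam}. usl2_of (c' l) * usl2_monom l)
          = of_int (lam - w) * (\<Sum>l\<in>{l\<in>S. weight l = lam}. usl2_of (c l) * usl2_monom l)"
        unfolding sum_distrib_left
      proof (rule sum.cong)
        fix l
        assume "l \<in> {l\<in>S. weight l = lam}"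
        then show "usl2_of (c' l) * usl2_monom l = of_int (lam - w) * (usl2_of (c l) * usl2_monom l)"
          by (simp only: c'_def mem_Collect_eq usl2_of_mult usl2_of_of_int mult.assoc[symmetric]
              mult_of_int_commute)
      qed simp
      finally show ?thesis
        using False S'_sum usl2_of_int_cancel[of "lam - w"] by (simp add: u_def)
    qed
  qed
  then show ?thesis
    using assms by blast
qed

inductive weight_span :: "nat \<Rightarrow> int \<Rightarrow> 'k::comm_ring_1 usl2 \<Rightarrow> bool" for n lam where
  zero: "weight_span n lam 0"
| monom: "length l < n \<Longrightarrow> weight l = lam \<Longrightarrow> weight_span n lam (usl2_of c * usl2_monom l)"
| add: "weight_span n lam x \<Longrightarrow> weight_span n lam y \<Longrightarrow> weight_span n lam (x + y)"

lemma weight_span_gen_mult: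
  "weight_span n lam x \<Longrightarrow> weight_span (Suc n) (gen_weight g + lam) (usl2_gen g * x)"
proof (induction rule: weight_span.induct)
  case (monom l c)
  have "usl2_gen g * (usl2_of c * usl2_monom l) = usl2_of c * usl2_monom (g # l)"
    by (simp add: mult.assoc[symmetric] usl2_of_gen_commute)
  moreover have "weight_span (Suc n) (gen_weight g + lam) (usl2_of c * usl2_monom (g # l))"
    using monom by (intro weight_span.monom) simp_all
  ultimately show ?case by simp
qed (simp_all add: distrib_left weight_span.intros)

lemma weight_span_sum:
  "finite S \<Longrightarrow> (\<And>l. l \<in> S \<Longrightarrow> length l < n \<and> weight l = lam) \<Longrightarrow>
    weight_span n lam (\<Sum>l\<in>S. usl2_of (c l) * usl2_monom l)"
  by (induction S rule: finite_induct) (auto intro: weight_span.intros)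

lemma gen_mult_Xm:
  "x \<noteq> GXm \<Longrightarrow> \<exists>d g. usl2_gen x * usl2_Xm = (usl2_Xm::'k::comm_ring_1 usl2) * usl2_gen x + usl2_of d * usl2_gen g
     \<and> gen_weight g = gen_weight x - 2"
proof (cases x)
  case GH
  have "usl2_gen x * usl2_Xm = usl2_Xm * usl2_gen x + usl2_of (-2) * (usl2_gen GXm :: 'k usl2)"
    using usl2_comm_H_Xm[where 'k='k] GH
    by (simp add: usl2_of_uminus usl2_of_of_int[of 2, simplified] algebra_simps)
  then show ?thesis using GH by (intro exI[of _ "-2"] exI[of _ GXm]) simp
next
  case GXp
  have "usl2_gen x * usl2_Xm = usl2_Xm * usl2_gen x + usl2_of 1 * (usl2_gen GH :: 'k usl2)"
    using usl2_comm_Xp_Xm[where 'k='k] GXp by (simp add: algebra_simps)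
  then show ?thesis using GXp by (intro exI[of _ 1] exI[of _ GH]) simp
qed simp

lemma monom_Xm_to_front:
  "GXm \<notin> set p \<Longrightarrow> \<exists>r. usl2_monom p * usl2_Xm * usl2_monom q = (usl2_Xm::'k::comm_ring_1 usl2) * usl2_monom (p @ q) + r \<and>
     weight_span (length p + 1 + length q) (weight p - 2 + weight q) r"
proof (induction p)
  case Nil
  then show ?case by (auto intro: weight_span.zero)
next
  case (Cons x p)
  then obtain r where r: "usl2_monom p * usl2_Xm * usl2_monom q = (usl2_Xm::'k usl2) * usl2_monom (p @ q) + r"
    "weight_span (length p + 1 + length q) (weight p - 2 + weight q) r"
    by auto
  obtain d g where dg: "usl2_gen x * usl2_Xm = (usl2_Xm::'k usl2) * usl2_gen x + usl2_of d * usl2_gen g"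
    "gen_weight g = gen_weight x - 2"
    using gen_mult_Xm[of x] Cons.prems by auto
  have "usl2_monom (x # p) * (usl2_Xm::'k usl2) * usl2_monom q
      = usl2_gen x * usl2_Xm * usl2_monom (p @ q) + usl2_gen x * r"
    using r(1) by (simp add: mult.assoc distrib_left)
  also have "\<dots> = usl2_Xm * usl2_monom ((x # p) @ q) + (usl2_of d * usl2_monom (g # p @ q) + usl2_gen x * r)"
    by (simp add: dg distrib_right mult.assoc)
  finally have e: "usl2_monom (x # p) * usl2_Xm * usl2_monom q
      = (usl2_Xm::'k usl2) * usl2_monom ((x # p) @ q) + (usl2_of d * usl2_monom (g # p @ q) + usl2_gen x * r)" .
  have "weight_span (length (x # p) + 1 + length q) (weight (x # p) - 2 + weight q)
      (usl2_of d * (usl2_monom (g # p @ q)::'k usl2))"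
    by (rule weight_span.monom) (simp_all add: dg)
  moreover have "weight_span (length (x # p) + 1 + length q) (weight (x # p) - 2 + weight q) (usl2_gen x * r)"
    using weight_span_gen_mult[OF r(2), of x] by (simp add: algebra_simps)
  ultimately show ?case
    using e weight_span.add by blast
qed

lemma weight_span_minus_2_factor:
  "weight_span n (-2) y \<Longrightarrow> \<exists>b. y = (usl2_Xm::'k::comm_ring_1 usl2) * b \<and> ad usl2_H b = 0"
proof (induction n arbitrary: y rule: less_induct)
  case (less n)
  from less.prems show ?case
  proof (induction rule: weight_span.induct)
    case zero
    then show ?case by (intro exI[of _ 0]) simp
  next
    case (add x y)
    then obtain b1 b2 where "x = (usl2_Xm::'k usl2) * b1" "ad usl2_H b1 = 0" "y = usl2_Xm * b2" "ad usl2_H b2 = 0"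
      by blast
    then show ?case by (intro exI[of _ "b1 + b2"]) (simp add: ad_add distrib_left)
  next
    case (monom l c)
    have "GXm \<in> set l"
      using monom weight_nonneg_if_no_Xm by fastforce
    then obtain p q where pq: "l = p @ GXm # q" "GXm \<notin> set p"
      by (meson split_list_first)
    obtain r where r: "usl2_monom p * usl2_Xm * usl2_monom q = (usl2_Xm::'k usl2) * usl2_monom (p @ q) + r"
      "weight_span (length p + 1 + length q) (weight p - 2 + weight q) r"
      using monom_Xm_to_front[OF pq(2)] by blast
    have "weight p - 2 + weight q = -2"
      using monom pq by simp
    with r(2) pq have "weight_span (length l) (-2) r"
      by simp
    then obtain b' where b': "r = usl2_Xm * b'" "ad usl2_H b' = 0"
      using less.IH monom by blast
    have pq_weight0: "ad usl2_H (usl2_monom (p @ q) :: 'k usl2) = 0"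
      using monom pq by (simp add: ad_H_monom)
    have "usl2_monom l = usl2_monom p * usl2_Xm * usl2_monom q"
      by (simp add: pq monom_append mult.assoc)
    also have "\<dots> = usl2_Xm * (usl2_monom (p @ q) + b')"
      by (simp add: r b' distrib_left)
    finally have "usl2_of c * usl2_monom l = usl2_Xm * (usl2_of c * (usl2_monom (p @ q) + b'))"
      by (metis mult.assoc usl2_of_central)
    moreover have "ad usl2_H (usl2_of c * (usl2_monom (p @ q) + b')) = 0"
      by (simp add: ad_usl2_of ad_add pq_weight0 b')
    ultimately show ?case by blast
  qed
qed

lemma weight_minus_2_factor:
  fixes y :: "'k::field_char_0 usl2"
  assumes "ad usl2_H y = - (2 * y)"
  shows "\<exists>b. y = usl2_Xm * b \<and> ad usl2_H b = 0"
proof -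
  obtain S c where S: "finite S" and y: "y = (\<Sum>l\<in>S. usl2_of (c l) * usl2_monom l)"
    using usl2_monom_span by blast
  have "y = (\<Sum>l\<in>{l\<in>S. weight l = -2}. usl2_of (c l) * usl2_monom l)"
    using ad_H_eigenvector_weight_support[OF S, of c "-2"] assms y by simp
  moreover have "weight_span (Suc (\<Sum>l\<in>S. length l)) (-2)
      (\<Sum>l\<in>{l\<in>S. weight l = -2}. usl2_of (c l) * usl2_monom l)"
    using S member_le_sum[of _ S length] by (intro weight_span_sum) (auto simp: less_Suc_eq_le)
  ultimately show ?thesis
    using weight_span_minus_2_factor by metis
qed

subsection \<open>The Casimir element\<close>

lemma usl2_Xp_Xm_swap: "usl2_Xp * usl2_Xm = usl2_Xm * usl2_Xp + (usl2_H :: 'k::comm_ring_1 usl2)"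
  using usl2_comm_Xp_Xm[where 'k='k] by (simp add: algebra_simps)

lemma usl2_H_Xm_swap: "usl2_H * usl2_Xm = usl2_Xm * usl2_H - usl2_Xm - (usl2_Xm :: 'k::comm_ring_1 usl2)"
  using usl2_comm_H_Xm[where 'k='k] by (simp add: algebra_simps mult_2)

lemma usl2_Xp_H_swap: "usl2_Xp * usl2_H = usl2_H * usl2_Xp - usl2_Xp - (usl2_Xp :: 'k::comm_ring_1 usl2)"
  using usl2_comm_H_Xp[where 'k='k] by (simp add: algebra_simps mult_2)

lemma usl2_Xp_Xm_swap': "usl2_Xp * (usl2_Xm * z) = usl2_Xm * (usl2_Xp * z) + (usl2_H :: 'k::comm_ring_1 usl2) * z"
  by (simp add: mult.assoc[symmetric] usl2_Xp_Xm_swap distrib_right)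

lemma usl2_H_Xm_swap': "usl2_H * (usl2_Xm * z) = usl2_Xm * (usl2_H * z) - usl2_Xm * z - (usl2_Xm :: 'k::comm_ring_1 usl2) * z"
  by (simp add: mult.assoc[symmetric] usl2_H_Xm_swap left_diff_distrib)

lemma usl2_Xp_H_swap': "usl2_Xp * (usl2_H * z) = usl2_H * (usl2_Xp * z) - usl2_Xp * z - (usl2_Xp :: 'k::comm_ring_1 usl2) * z"
  by (simp add: mult.assoc[symmetric] usl2_Xp_H_swap left_diff_distrib)

lemmas usl2_swaps = usl2_Xp_Xm_swap usl2_H_Xm_swap usl2_Xp_H_swap
  usl2_Xp_Xm_swap' usl2_H_Xm_swap' usl2_Xp_H_swap'

definition casimir :: "'k::comm_ring_1 usl2" where
  "casimir = 2 * usl2_Xp * usl2_Xm + 2 * usl2_Xm * usl2_Xp + usl2_H * usl2_H"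

lemma casimir_central: "casimir * u = u * (casimir :: 'k::comm_ring_1 usl2)"
proof -
  have gen: "casimir * usl2_gen x = usl2_gen x * (casimir :: 'k usl2)" for x
    by (cases x) (simp_all add: casimir_def algebra_simps mult_2 usl2_swaps)
  have monom: "casimir * usl2_monom l = usl2_monom l * (casimir :: 'k usl2)" for l
    by (induction l) (simp_all add: mult.assoc[symmetric] gen, simp add: mult.assoc)
  obtain S c where u: "u = (\<Sum>l\<in>S. usl2_of (c l) * usl2_monom l)"
    using usl2_monom_span by blast
  have "(casimir::'k usl2) * (usl2_of (c l) * usl2_monom l) = (usl2_of (c l) * usl2_monom l) * casimir" for l
    by (metis monom mult.assoc usl2_of_central)
  then show ?thesis
    unfolding u sum_distrib_left sum_distrib_right by simp
qed

text \<open>4 X^+ X^- = C + 2 H - H^2 with C the central Casimir element.\<close>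
lemma weight_0_commute_Xp_Xm:
  fixes u :: "'k::field_char_0 usl2"
  assumes "ad usl2_H u = 0"
  shows "u * (usl2_Xp * usl2_Xm) = (usl2_Xp * usl2_Xm) * u"
proof -
  have "of_int 4 * (usl2_Xp * usl2_Xm) = 2 * (usl2_Xp * usl2_Xm) + 2 * (usl2_Xp * (usl2_Xm :: 'k usl2))"
    by (simp flip: distrib_right)
  also have "\<dots> = casimir + 2 * usl2_H - usl2_H * usl2_H"
    by (simp add: casimir_def usl2_Xp_Xm_swap algebra_simps)
  finally have four: "of_int 4 * (usl2_Xp * usl2_Xm) = casimir + 2 * usl2_H - usl2_H * (usl2_H :: 'k usl2)" .
  have H: "u * usl2_H = usl2_H * u"
    using assms by (simp add: ad_def)
  have HH: "u * (usl2_H * usl2_H) = (usl2_H * usl2_H) * u"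
    by (simp add: mult.assoc[symmetric] H) (simp add: mult.assoc H)
  have "u * (casimir + 2 * usl2_H - usl2_H * usl2_H) = (casimir + 2 * usl2_H - usl2_H * usl2_H) * u"
    by (simp only: mult_2 distrib_left distrib_right right_diff_distrib left_diff_distrib
        casimir_central H HH)
  then have "u * (of_int 4 * (usl2_Xp * usl2_Xm)) = (of_int 4 * (usl2_Xp * usl2_Xm)) * u"
    by (simp only: four)
  moreover have "u * (of_int 4 * X) = of_int 4 * (u * X)" for X
    using mult_of_int_commute[of 4 u] by (simp add: mult.assoc[symmetric])
  ultimately have "of_int 4 * (u * (usl2_Xp * usl2_Xm)) = of_int 4 * ((usl2_Xp * usl2_Xm) * u)"
    by (simp add: mult.assoc)
  then show ?thesis
    by (rule usl2_of_int_cancel[rotated]) simp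
qed

subsection \<open>Lowest weight vectors of the adjoint action\<close>

lemma ad_Xp_locally_nilpotent: "\<exists>N. (ad usl2_Xp ^^ N) (u :: 'k::comm_ring_1 usl2) = 0"
proof -
  have gen: "(ad usl2_Xp ^^ 3) (usl2_gen x :: 'k usl2) = 0" for x
    by (cases x) (simp_all add: numeral_3_eq_3 ad_def usl2_swaps ad_diff ad_uminus
        right_diff_distrib left_diff_distrib)
  have monom: "(ad usl2_Xp ^^ (3 * length l + 1)) (usl2_monom l :: 'k usl2) = 0" for l
  proof (induction l)
    case Nil
    then show ?case by (simp add: ad_def)
  next
    case (Cons x l)
    then show ?case
      using ad_power_mult_eq_0[OF _ gen Cons.IH, of "3 * length (x # l) + 1"] by simp
  qed
  obtain S c where S: "finite S" and u: "u = (\<Sum>l\<in>S. usl2_of (c l) * usl2_monom l)"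
    using usl2_monom_span by blast
  define N where "N = (\<Sum>l\<in>S. 3 * length l + 1)"
  have "(ad usl2_Xp ^^ N) (usl2_of (c l) * (usl2_monom l :: 'k usl2)) = 0" if "l \<in> S" for l
  proof -
    have "3 * length l + 1 \<le> N"
      unfolding N_def using member_le_sum[of l S "\<lambda>l. 3 * length l + 1"] that S by simp
    then show ?thesis
      by (simp add: ad_power_usl2_of ad_power_mono[OF monom])
  qed
  then have "(ad usl2_Xp ^^ N) u = 0"
    by (simp add: u ad_power_sum)
  then show ?thesis ..
qed

lemma ad_H_Xp: "ad usl2_H usl2_Xp = usl2_Xp + (usl2_Xp :: 'k::comm_ring_1 usl2)"
  using usl2_comm_H_Xp by (simp add: ad_def mult_2)

lemma ad_Xm_Xp: "ad usl2_Xm usl2_Xp = - (usl2_H :: 'k::comm_ring_1 usl2)"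
  by (simp add: ad_def flip: usl2_comm_Xp_Xm)

text \<open>If [H, w] = 2w and [X^-, w] = 0, then [X^-, ad(X^+)^(k+1) w] = -(k+1)(k+2) ad(X^+)^k w,
  so local nilpotency of ad X^+ forces w = 0 (in characteristic zero).\<close>
lemma ad_Xm_lowest_weight_2_eq_0:
  fixes w :: "'k::field_char_0 usl2"
  assumes H: "ad usl2_H w = 2 * w" and Xm: "ad usl2_Xm w = 0"
  shows "w = 0"
proof -
  have weight: "ad usl2_H ((ad usl2_Xp ^^ k) w) = of_nat (2 * k + 2) * (ad usl2_Xp ^^ k) w" for k
  proof (induction k)
    case (Suc k)
    have "ad usl2_H ((ad usl2_Xp ^^ Suc k) w)
        = of_nat (2 * k + 2) * ad usl2_Xp ((ad usl2_Xp ^^ k) w)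
          + ad usl2_Xp ((ad usl2_Xp ^^ k) w) + ad usl2_Xp ((ad usl2_Xp ^^ k) w)"
      by (simp only: funpow.simps(2) o_apply ad_jacobi[of usl2_H] Suc ad_of_nat ad_H_Xp ad_left_add add.assoc)
    also have "\<dots> = of_nat (2 * Suc k + 2) * (ad usl2_Xp ^^ Suc k) w"
      by (simp add: algebra_simps)
    finally show ?case .
  qed (simp add: H mult_2)
  have Xm_Xp: "ad usl2_Xm (ad usl2_Xp y) = ad usl2_Xp (ad usl2_Xm y) - ad usl2_H y" for y :: "'k usl2"
    by (simp add: ad_jacobi[of usl2_Xm] ad_Xm_Xp ad_left_uminus)
  have lower: "ad usl2_Xm ((ad usl2_Xp ^^ Suc k) w) = - (of_nat ((k + 1) * (k + 2)) * (ad usl2_Xp ^^ k) w)" for k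
  proof (induction k)
    case 0
    then show ?case
      by (simp add: Xm_Xp Xm H)
  next
    case (Suc k)
    have "ad usl2_Xm ((ad usl2_Xp ^^ Suc (Suc k)) w)
        = ad usl2_Xp (ad usl2_Xm ((ad usl2_Xp ^^ Suc k) w)) - ad usl2_H ((ad usl2_Xp ^^ Suc k) w)"
      using Xm_Xp by simp
    also have "\<dots> = - (of_nat ((k + 1) * (k + 2)) * (ad usl2_Xp ^^ Suc k) w)
        - of_nat (2 * Suc k + 2) * (ad usl2_Xp ^^ Suc k) w"
      by (simp only: Suc weight ad_uminus ad_of_nat) simp
    also have "\<dots> = - (of_nat ((Suc k + 1) * (Suc k + 2)) * (ad usl2_Xp ^^ Suc k) w)"
    proof -
      have "(Suc k + 1) * (Suc k + 2) = (k + 1) * (k + 2) + (2 * Suc k + 2)"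
        by simp
      then show ?thesis
        by (simp only: of_nat_add distrib_right) (simp add: algebra_simps)
    qed
    finally show ?case .
  qed
  have "(ad usl2_Xp ^^ N) w = 0 \<Longrightarrow> w = 0" for N
  proof (induction N)
    case (Suc k)
    have "- (of_nat ((k + 1) * (k + 2)) * (ad usl2_Xp ^^ k) w) = 0"
      using lower[of k] Suc.prems by (metis ad_0)
    then have "of_int (int ((k + 1) * (k + 2))) * (ad usl2_Xp ^^ k) w = of_int (int ((k + 1) * (k + 2))) * 0"
      by (simp only: of_int_of_nat_eq neg_equal_0_iff_equal mult_zero_right)
    then show ?case
      by (rule Suc.IH[OF usl2_of_int_cancel[rotated]]) (simp del: of_nat_mult)
  qed simp
  then show ?thesis
    using ad_Xp_locally_nilpotent by blast
qed

subsection \<open>Extending a ring homomorphism R \<rightarrow> R[[h]] to R[[h]]\<close>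

locale fps_coeff_hom =
  fixes P :: "'r::ring_1 \<Rightarrow> 'r fps"
  assumes P_1: "P 1 = 1"
    and P_add: "P (a + b) = P a + P b"
    and P_mult: "P (a * b) = P a * P b"
begin

lemma P_0: "P 0 = 0"
  using P_add[of 0 0] by simp

lemma P_sum: "P (sum f S) = (\<Sum>x\<in>S. P (f x))"
  by (induction S rule: infinite_finite_induct) (simp_all add: P_0 P_add)

definition extension :: "'r fps \<Rightarrow> 'r fps" where
  "extension x = Abs_fps (\<lambda>n. \<Sum>i\<le>n. P (x $ i) $ (n - i))"

lemma extension_nth: "extension x $ n = (\<Sum>i\<le>n. P (x $ i) $ (n - i))"
  by (simp add: extension_def)

definition extension_trunc :: "nat \<Rightarrow> 'r fps \<Rightarrow> 'r fps" where
  "extension_trunc N x = (\<Sum>i\<le>N. fps_X ^ i * P (x $ i))"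

lemma extension_trunc_nth: "n \<le> N \<Longrightarrow> extension_trunc N x $ n = extension x $ n"
proof -
  assume "n \<le> N"
  have "extension_trunc N x $ n = (\<Sum>i\<le>N. if n < i then 0 else P (x $ i) $ (n - i))"
    by (simp add: extension_trunc_def fps_sum_nth fps_X_power_mult_nth)
  also have "\<dots> = (\<Sum>i\<le>n. if n < i then 0 else P (x $ i) $ (n - i))"
    using \<open>n \<le> N\<close> by (intro sum.mono_neutral_right) auto
  finally show ?thesis
    by (simp add: extension_nth)
qed

text \<open>Multiplicativity of the extension is checked on the finite sums extension_trunc, which agree
  with it up to degree N.\<close>
lemma extension_trunc_mult_nth:
  assumes "n \<le> N"
  shows "extension_trunc N (x * y) $ n = (extension_trunc N x * extension_trunc N y) $ n"
proof -
  define g where "g j l = fps_X ^ (j + l) * (P (x $ j) * P (y $ l))" for j l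
  have "extension_trunc N (x * y) = (\<Sum>k\<le>N. \<Sum>i\<le>k. g i (k - i))"
    unfolding extension_trunc_def g_def
  proof (rule sum.cong[OF refl])
    fix k
    have "fps_X ^ k * P ((x * y) $ k) = (\<Sum>i\<le>k. fps_X ^ k * (P (x $ i) * P (y $ (k - i))))"
      by (simp add: fps_mult_nth atLeast0AtMost P_sum P_mult sum_distrib_left)
    also have "\<dots> = (\<Sum>i\<le>k. fps_X ^ (i + (k - i)) * (P (x $ i) * P (y $ (k - i))))"
      by (rule sum.cong) auto
    finally show "fps_X ^ k * P ((x * y) $ k) = (\<Sum>i\<le>k. fps_X ^ (i + (k - i)) * (P (x $ i) * P (y $ (k - i))))" .
  qed
  also have "\<dots> = (\<Sum>(j, l)\<in>{(j, l). j + l \<le> N}. g j l)"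
    by (rule sum.triangle_reindex_eq[symmetric])
  finally have lhs: "extension_trunc N (x * y) = (\<Sum>(j, l)\<in>{(j, l). j + l \<le> N}. g j l)" .
  have "extension_trunc N x * extension_trunc N y = (\<Sum>j\<le>N. \<Sum>l\<le>N. g j l)"
    unfolding extension_trunc_def g_def sum_product
  proof (intro sum.cong refl)
    fix j l
    have "P (x $ j) * fps_X ^ l = fps_X ^ l * P (x $ j)"
      by (rule fps_mult_fps_X_power_commute[symmetric])
    then show "fps_X ^ j * P (x $ j) * (fps_X ^ l * P (y $ l)) = fps_X ^ (j + l) * (P (x $ j) * P (y $ l))"
      by (simp add: power_add mult.assoc) (simp add: mult.assoc[symmetric])
  qed
  also have "\<dots> = (\<Sum>(j, l)\<in>{..N} \<times> {..N}. g j l)"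
    by (simp add: sum.cartesian_product)
  finally have rhs: "extension_trunc N x * extension_trunc N y = (\<Sum>(j, l)\<in>{..N} \<times> {..N}. g j l)" .
  have "(\<Sum>(j, l)\<in>{..N} \<times> {..N}. g j l) $ n = (\<Sum>(j, l)\<in>{..N} \<times> {..N}. g j l $ n)"
    by (simp add: fps_sum_nth case_prod_unfold)
  also have "\<dots> = (\<Sum>(j, l)\<in>{(j, l). j + l \<le> N}. g j l $ n)"
    using assms by (intro sum.mono_neutral_right) (auto simp: g_def fps_X_power_mult_nth split: if_splits)
  also have "\<dots> = (\<Sum>(j, l)\<in>{(j, l). j + l \<le> N}. g j l) $ n"
    by (simp add: fps_sum_nth case_prod_unfold)
  finally show ?thesis
    using lhs rhs by simp
qed

lemma extension_mult: "extension (x * y) = extension x * extension y"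
proof (rule fps_ext)
  fix n
  have "extension (x * y) $ n = extension_trunc n (x * y) $ n"
    by (simp add: extension_trunc_nth)
  also have "\<dots> = (extension_trunc n x * extension_trunc n y) $ n"
    by (simp add: extension_trunc_mult_nth)
  also have "\<dots> = (\<Sum>i=0..n. extension_trunc n x $ i * extension_trunc n y $ (n - i))"
    by (simp add: fps_mult_nth)
  also have "\<dots> = (\<Sum>i=0..n. extension x $ i * extension y $ (n - i))"
    by (rule sum.cong) (simp_all add: extension_trunc_nth)
  also have "\<dots> = (extension x * extension y) $ n"
    by (simp add: fps_mult_nth)
  finally show "extension (x * y) $ n = (extension x * extension y) $ n" .
qed

lemma extension_add: "extension (x + y) = extension x + extension y"
  by (rule fps_ext) (simp add: extension_nth P_add sum.distrib)

lemma extension_diff: "extension (x - y) = extension x - extension y"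
  using extension_add[of "x - y" y] by (simp add: algebra_simps)

lemma extension_const: "extension (fps_const u) = P u"
proof (rule fps_ext)
  fix n
  have "(\<Sum>i\<le>n. P (fps_const u $ i) $ (n - i)) = (\<Sum>i\<le>n. if i = 0 then P u $ n else 0)"
    by (rule sum.cong) (auto simp: P_0)
  then show "extension (fps_const u) $ n = P u $ n"
    by (simp add: extension_nth)
qed

lemma extension_1: "extension 1 = 1"
  using extension_const[of 1] by (simp add: P_1)

lemma extension_fixed:
  assumes "\<And>i. P (x $ i) = fps_const (x $ i)"
  shows "extension x = x"
proof (rule fps_ext)
  fix n
  have "(\<Sum>i\<le>n. P (x $ i) $ (n - i)) = (\<Sum>i\<le>n. if i = n then x $ n else 0)"
    by (rule sum.cong) (auto simp: assms)
  then show "extension x $ n = x $ n"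
    by (simp add: extension_nth)
qed

context
  assumes P_nth_0: "\<And>u. P u $ 0 = u"
begin

lemma extension_eq_0: "extension x = 0 \<Longrightarrow> x = 0"
proof (rule ccontr)
  assume ext: "extension x = 0" and "x \<noteq> 0"
  define m where "m = subdegree x"
  have "extension x $ m = (\<Sum>i\<le>m. if i = m then x $ m else 0)"
    unfolding extension_nth
  proof (rule sum.cong[OF refl])
    fix i
    assume "i \<in> {..m}"
    then show "P (x $ i) $ (m - i) = (if i = m then x $ m else 0)"
      using nth_less_subdegree_zero[of i x] by (cases "i = m") (auto simp: m_def P_nth_0 P_0)
  qed
  then show False
    using ext \<open>x \<noteq> 0\<close> by (simp add: m_def)
qed

text \<open>The preimage of t is computed coefficient by coefficient, since P u $ 0 = u.\<close>
function preimage_coeff :: "'r fps \<Rightarrow> nat \<Rightarrow> 'r" where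
  "preimage_coeff t n = t $ n - (\<Sum>i<n. P (preimage_coeff t i) $ (n - i))"
  by auto
termination
  by (relation "measure (\<lambda>(t, n). n)") auto

declare preimage_coeff.simps [simp del]

lemma extension_preimage: "extension (Abs_fps (preimage_coeff t)) = t"
proof (rule fps_ext)
  fix n
  have "extension (Abs_fps (preimage_coeff t)) $ n = (\<Sum>i<Suc n. P (preimage_coeff t i) $ (n - i))"
    by (simp only: extension_nth fps_nth_Abs_fps lessThan_Suc_atMost)
  also have "\<dots> = (\<Sum>i<n. P (preimage_coeff t i) $ (n - i)) + preimage_coeff t n"
    by (simp only: sum.lessThan_Suc P_nth_0 diff_self_eq_0)
  also have "\<dots> = t $ n"
    by (subst (2) preimage_coeff.simps) simp
  finally show "extension (Abs_fps (preimage_coeff t)) $ n = t $ n" .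
qed

lemma bij_extension: "bij extension"
proof (rule bijI)
  show "inj extension"
  proof (rule injI)
    fix x y
    assume "extension x = extension y"
    then have "extension (x - y) = 0"
      by (simp add: extension_diff)
    then have "x - y = 0"
      by (rule extension_eq_0)
    then show "x = y"
      by simp
  qed
  show "surj extension"
    by (rule surjI[where f="\<lambda>t. Abs_fps (preimage_coeff t)"]) (rule extension_preimage)
qed

end

end

lemma kh_scal_nth: "kh_scal f $ n = usl2_of (f $ n)"
  by (simp add: kh_scal_def)

lemma kh_scal_X: "kh_scal fps_X = (fps_X :: 'k::comm_ring_1 usl2 fps)"
  by (rule fps_ext) (simp add: kh_scal_nth fps_X_def)

lemma kh_scal_const: "kh_scal (fps_const c) = (fps_const (usl2_of c) :: 'k::comm_ring_1 usl2 fps)"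
  by (rule fps_ext) (simp add: kh_scal_nth)

lemma ad_fps_const_nth: "ad (fps_const a) x $ n = ad a (x $ n)"
  by (simp add: ad_def)

lemma modh_refl: "modh \<iota> a a"
  unfolding modh_def by (intro exI[of _ 0]) simp

lemma modh_sym: "modh \<iota> a b \<Longrightarrow> modh \<iota> b a"
  unfolding modh_def by (metis minus_diff_eq mult_minus_right)

lemma modh_trans: "modh \<iota> a b \<Longrightarrow> modh \<iota> b c \<Longrightarrow> modh \<iota> a c"
proof -
  assume "modh \<iota> a b" "modh \<iota> b c"
  then obtain u v where "a - b = \<iota> fps_X * u" "b - c = \<iota> fps_X * v"
    unfolding modh_def by blast
  then have "a - c = \<iota> fps_X * (u + v)"
    by (simp add: distrib_left algebra_simps)
  then show ?thesis
    unfolding modh_def by blast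
qed

lemma fps_X_dvd_iff_nth_0: "(\<exists>c. f = fps_X * c) \<longleftrightarrow> f $ 0 = (0::'r::ring_1)"
proof
  assume "f $ 0 = 0"
  then have "f = fps_X * fps_shift 1 f"
    by (intro fps_ext) simp
  then show "\<exists>c. f = fps_X * c" ..
qed auto

locale kh_iso =
  fixes \<iota> :: "'k::field fps \<Rightarrow> 'a::ring_1" and g :: "'k usl2 fps \<Rightarrow> 'a"
  assumes kh_alg_iso: "kh_alg_iso \<iota> g"
begin

lemma add: "g (x + y) = g x + g y"
  using kh_alg_iso by (simp add: kh_alg_iso_def)

lemma mult: "g (x * y) = g x * g y"
  using kh_alg_iso by (simp add: kh_alg_iso_def)

lemma one: "g 1 = 1"
  using kh_alg_iso by (simp add: kh_alg_iso_def)

lemma kh_scal_mult: "g (kh_scal f * x) = \<iota> f * g x"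
  using kh_alg_iso unfolding kh_alg_iso_def by blast

lemma kh_scal: "g (kh_scal f) = \<iota> f"
  using kh_scal_mult[of f 1] by (simp add: one)

lemma bij: "bij g"
  using kh_alg_iso by (simp add: kh_alg_iso_def)

lemma zero: "g 0 = 0"
  using add[of 0 0] by simp

lemma uminus: "g (- x) = - g x"
  using add[of x "- x"] by (simp add: zero eq_neg_iff_add_eq_0 add.commute)

lemma diff: "g (x - y) = g x - g y"
  using add[of x "- y"] by (simp add: uminus)

lemma ad: "g (ad x y) = ad (g x) (g y)"
  by (simp add: ad_def diff mult)

lemma X_mult: "g (fps_X * x) = \<iota> fps_X * g x"
  using kh_scal_mult[of fps_X x] by (simp add: kh_scal_X)

lemma inj: "g x = g y \<Longrightarrow> x = y"
  using bij by (simp add: bij_def inj_eq)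

lemma apply_inv: "g (inv g y) = y"
  using bij by (simp add: bij_is_surj surj_f_inv_f)

lemma inv_apply: "inv g (g x) = x"
  using bij by (simp add: bij_is_inj)

lemma inv_add: "inv g (a + b) = inv g a + inv g b"
  by (rule inj) (simp add: add apply_inv)

lemma inv_uminus: "inv g (- a) = - inv g a"
  by (rule inj) (simp add: uminus apply_inv)

lemma inv_ad: "inv g (ad a b) = ad (inv g a) (inv g b)"
  by (rule inj) (simp add: ad apply_inv)

lemma inv_X_mult: "inv g (\<iota> fps_X * a) = fps_X * inv g a"
  by (rule inj) (simp add: X_mult apply_inv)

lemma modh_iff_nth_0: "modh \<iota> (g x) (g y) \<longleftrightarrow> x $ 0 = y $ 0"
proof -
  have "modh \<iota> (g x) (g y) \<longleftrightarrow> (\<exists>c. x - y = fps_X * c)"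
  proof
    assume "modh \<iota> (g x) (g y)"
    then obtain c where "g (x - y) = \<iota> fps_X * c"
      by (auto simp: modh_def diff)
    then have "x - y = fps_X * inv g c"
      by (metis inv_apply inv_X_mult)
    then show "\<exists>c. x - y = fps_X * c" ..
  next
    assume "\<exists>c. x - y = fps_X * c"
    then obtain c where "x - y = fps_X * c" ..
    then have "g x - g y = \<iota> fps_X * g c"
      by (simp flip: diff X_mult)
    then show "modh \<iota> (g x) (g y)"
      unfolding modh_def ..
  qed
  also have "\<dots> \<longleftrightarrow> (x - y) $ 0 = 0"
    by (rule fps_X_dvd_iff_nth_0)
  finally show ?thesis
    by simp
qed

lemma nth_0_inv_if_modh: "modh \<iota> (g x) a \<Longrightarrow> inv g a $ 0 = x $ 0"
  using modh_iff_nth_0[of x "inv g a"] by (simp add: apply_inv)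

lemma const_alg_hom: "usl2_alg_hom (\<lambda>c. \<iota> (fps_const c)) (\<lambda>u. g (fps_const u))"
  unfolding usl2_alg_hom_def
proof (intro conjI allI)
  fix a b c u
  show "g (fps_const 1) = 1"
    using one by simp
  show "g (fps_const (a + b)) = g (fps_const a) + g (fps_const b)"
    by (simp flip: add)
  show "g (fps_const (a * b)) = g (fps_const a) * g (fps_const b)"
    by (simp flip: mult)
  show "g (fps_const (usl2_of c * u)) = \<iota> (fps_const c) * g (fps_const u)"
    using kh_scal_mult[of "fps_const c" "fps_const u"] by (simp add: kh_scal_const)
qed

end

lemma fps_additive_X_linear_eq_id:
  fixes th :: "'r::ring_1 fps \<Rightarrow> 'r fps"
  assumes add: "\<And>x y. th (x + y) = th x + th y"
    and const: "\<And>u. th (fps_const u) = fps_const u"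
    and X_mult: "\<And>x. th (fps_X * x) = fps_X * th x"
  shows "th x = x"
proof -
  have split: "th x = fps_const (x $ 0) + fps_X * th (fps_shift 1 x)" for x
  proof -
    have "x = fps_const (x $ 0) + fps_X * fps_shift 1 x"
      by (rule fps_ext) simp
    then have "th x = th (fps_const (x $ 0) + fps_X * fps_shift 1 x)"
      by (rule arg_cong)
    then show ?thesis
      by (simp only: add const X_mult)
  qed
  have "\<forall>x. th x $ m = x $ m" for m
  proof (induction m)
    case 0
    show ?case
    proof
      fix x
      show "th x $ 0 = x $ 0"
        using split[of x] by simp
    qed
  next
    case (Suc m)
    show ?case
    proof
      fix x
      show "th x $ Suc m = x $ Suc m"
        using split[of x] Suc by simp
    qed
  qed
  then show ?thesis
    by (simp add: fps_ext)
qed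

lemma ad_fps_const: "ad (fps_const a) (fps_const b) = fps_const (ad a b)"
  by (simp add: ad_def)

text \<open>E - X^+ is, coefficientwise, a lowest weight vector of weight 2 for the adjoint action.\<close>
lemma fps_Xp_unique:
  fixes E :: "'k::field_char_0 usl2 fps"
  assumes H: "ad (fps_const usl2_H) E = E + E"
    and Xm: "ad (fps_const usl2_Xm) E = - fps_const usl2_H"
  shows "E = fps_const usl2_Xp"
proof -
  define D where "D = E - fps_const usl2_Xp"
  have HD: "ad (fps_const usl2_H) D = D + D"
    using H by (simp add: D_def ad_diff ad_fps_const ad_H_Xp)
  have XmD: "ad (fps_const usl2_Xm) D = 0"
    using Xm by (simp add: D_def ad_diff ad_fps_const ad_Xm_Xp)
  have "ad usl2_H (D $ n) = 2 * D $ n" for n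
    using arg_cong[OF HD, of "\<lambda>x. x $ n"] by (simp add: ad_fps_const_nth mult_2)
  moreover have "ad usl2_Xm (D $ n) = 0" for n
    using arg_cong[OF XmD, of "\<lambda>x. x $ n"] by (simp add: ad_fps_const_nth)
  ultimately have "D = 0"
    by (intro fps_ext) (simp add: ad_Xm_lowest_weight_2_eq_0)
  then show ?thesis
    by (simp add: D_def)
qed

lemma kh_alg_iso_unique:
  fixes \<iota> :: "'k::field_char_0 fps \<Rightarrow> 'a::ring_1"
  assumes iso1: "kh_alg_iso \<iota> g1" and iso2: "kh_alg_iso \<iota> g2"
    and H: "g1 (fps_const usl2_H) = g2 (fps_const usl2_H)"
    and Xm: "g1 (fps_const usl2_Xm) = g2 (fps_const usl2_Xm)"
  shows "g1 = g2"
proof -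
  interpret g1: kh_iso \<iota> g1 by (rule kh_iso.intro) fact
  interpret g2: kh_iso \<iota> g2 by (rule kh_iso.intro) fact
  define th where "th x = inv g1 (g2 x)" for x
  have th_const: "th (fps_const u) = fps_const u" if "g1 (fps_const u) = g2 (fps_const u)" for u
    by (simp add: th_def g1.inv_apply flip: that)
  have th_add: "th (x + y) = th x + th y" for x y
    by (simp add: th_def g2.add g1.inv_add)
  have th_ad: "th (ad x y) = ad (th x) (th y)" for x y
    by (simp add: th_def g2.ad g1.inv_ad)
  have "ad (fps_const usl2_H) (th (fps_const usl2_Xp)) = th (ad (fps_const usl2_H) (fps_const usl2_Xp))"
    by (simp add: th_ad th_const[OF H])
  also have "\<dots> = th (fps_const usl2_Xp) + th (fps_const usl2_Xp)"
    by (simp add: ad_fps_const ad_H_Xp th_add flip: fps_const_add)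
  moreover have "ad (fps_const usl2_Xm) (th (fps_const usl2_Xp)) = th (ad (fps_const usl2_Xm) (fps_const usl2_Xp))"
    by (simp add: th_ad th_const[OF Xm])
  moreover have "\<dots> = - fps_const usl2_H"
  proof -
    have "g1 (fps_const (- usl2_H)) = g2 (fps_const (- usl2_H))"
      using H by (simp add: g1.uminus g2.uminus flip: fps_const_neg)
    then show ?thesis
      by (simp add: ad_fps_const ad_Xm_Xp th_const)
  qed
  ultimately have th_Xp: "th (fps_const usl2_Xp) = fps_const usl2_Xp"
    by (intro fps_Xp_unique) simp_all
  have Xp: "g1 (fps_const usl2_Xp) = g2 (fps_const usl2_Xp)"
    using arg_cong[OF th_Xp, of g1] by (simp add: th_def g1.apply_inv)
  have "(\<lambda>u. g1 (fps_const u)) = (\<lambda>u. g2 (fps_const u))"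
  proof (rule usl2_alg_hom_eqI[OF g1.const_alg_hom g2.const_alg_hom])
    fix x
    show "g1 (fps_const (usl2_gen x)) = g2 (fps_const (usl2_gen x))"
      by (cases x) (simp_all add: H Xm Xp)
  qed
  then have "th (fps_const u) = fps_const u" for u
    by (intro th_const) (rule fun_cong)
  moreover have "th (fps_X * x) = fps_X * th x" for x
    by (simp add: th_def g2.X_mult g1.inv_X_mult)
  ultimately have th_id: "th x = x" for x
    using th_add by (rule fps_additive_X_linear_eq_id[rotated])
  show ?thesis
  proof
    fix x
    have "g1 (th x) = g2 x"
      by (simp add: th_def g1.apply_inv)
    then show "g1 x = g2 x"
      by (simp add: th_id)
  qed
qed

subsection \<open>Straightening X^-\<close>

abbreviation fps_usl2_of :: "'k::comm_ring_1 \<Rightarrow> 'k usl2 fps" where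
  "fps_usl2_of c \<equiv> fps_const (usl2_of c)"

lemma central_ring_hom_fps_usl2_of: "central_ring_hom (fps_usl2_of :: 'k::comm_ring_1 \<Rightarrow> 'k usl2 fps)"
  unfolding central_ring_hom_def
proof (intro conjI allI)
  fix c :: 'k and x :: "'k usl2 fps"
  show "fps_usl2_of c * x = x * fps_usl2_of c"
    by (rule fps_ext) (simp add: usl2_of_central)
qed (simp_all add: usl2_of_add usl2_of_mult)

locale h_trivialization =
  fixes \<iota> :: "'k::field_char_0 fps \<Rightarrow> 'a::ring_1" and g0 :: "'k usl2 fps \<Rightarrow> 'a"
    and H Xm Xp :: 'a
  assumes kh_alg_iso_g0: "kh_alg_iso \<iota> g0"
    and g0_H: "g0 (fps_const usl2_H) = H"
    and bar_a_iso_g0: "bar_a_iso \<iota> g0 H Xm Xp"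
    and a_relations: "a_relations H Xm Xp"
begin

sublocale g0: kh_iso \<iota> g0
  by (rule kh_iso.intro) (rule kh_alg_iso_g0)

definition Y :: "'k usl2 fps" where
  "Y = inv g0 Xm"

lemma Y_nth_0: "Y $ 0 = usl2_Xm"
proof -
  have "modh \<iota> (g0 (fps_const usl2_Xm)) Xm"
    using bar_a_iso_g0 by (simp add: bar_a_iso_def)
  from g0.nth_0_inv_if_modh[OF this] show ?thesis
    by (simp add: Y_def)
qed

lemma ad_H_Y: "ad (fps_const usl2_H) Y = - (Y + Y)"
proof -
  have H_inv: "fps_const usl2_H = inv g0 H"
    by (simp add: g0.inv_apply flip: g0_H)
  have ad_H_Xm: "ad H Xm = - (Xm + Xm)"
    using a_relations by (simp add: a_relations_def ad_def mult_2)
  have "ad (fps_const usl2_H) Y = inv g0 (ad H Xm)"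
    by (simp add: Y_def H_inv g0.inv_ad)
  also have "\<dots> = - (Y + Y)"
    by (simp only: ad_H_Xm g0.inv_uminus g0.inv_add Y_def)
  finally show ?thesis .
qed

text \<open>Every coefficient of Y has weight -2, so Y = X^- q with q of weight 0 and q $ 0 = 1.\<close>
definition q :: "'k usl2 fps" where
  "q = Abs_fps (\<lambda>n. if n = 0 then 1 else (SOME b. Y $ n = usl2_Xm * b \<and> ad usl2_H b = 0))"

lemma Y_eq: "Y = fps_const usl2_Xm * q"
  and ad_H_q_nth: "ad usl2_H (q $ n) = 0"
proof -
  define b where "b n = (SOME b. Y $ n = usl2_Xm * b \<and> ad usl2_H b = 0)" for n
  have "ad usl2_H (Y $ n) = - (2 * Y $ n)" for n
    using arg_cong[OF ad_H_Y, of "\<lambda>x. x $ n"] by (simp add: ad_fps_const_nth mult_2)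
  then have factor: "Y $ n = usl2_Xm * b n \<and> ad usl2_H (b n) = 0" for n
    unfolding b_def by (rule someI_ex[OF weight_minus_2_factor])
  have q: "q = Abs_fps (\<lambda>n. if n = 0 then 1 else b n)"
    unfolding q_def b_def ..
  show "Y = fps_const usl2_Xm * q"
  proof (rule fps_ext)
    fix n
    show "Y $ n = (fps_const usl2_Xm * q) $ n"
      by (cases n) (simp add: q Y_nth_0, simp add: q factor)
  qed
  show "ad usl2_H (q $ n) = 0"
    by (simp add: q factor)
qed

lemma q_nth_0: "q $ 0 = 1"
  by (simp add: q_def)

lemma q_commute_H: "fps_const usl2_H * q = q * fps_const usl2_H"
  by (rule fps_ext) (use ad_H_q_nth in \<open>simp add: ad_def\<close>)

lemma q_commute_Xp_Xm: "fps_const (usl2_Xp * usl2_Xm) * q = q * fps_const (usl2_Xp * usl2_Xm)"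
  by (rule fps_ext) (simp add: weight_0_commute_Xp_Xm[OF ad_H_q_nth])

definition q_inv :: "'k usl2 fps" where
  "q_inv = fps_left_inverse q 1"

lemma q_inv_mult: "q_inv * q = 1"
  unfolding q_inv_def by (rule fps_left_inverse) (simp add: q_nth_0)

lemma mult_q_inv: "q * q_inv = 1"
  unfolding q_inv_def
  by (simp add: fps_left_inverse_eq_fps_right_inverse[of 1 q 1] q_nth_0 fps_right_inverse)

lemma q_inv_commute:
  assumes "c * q = q * c"
  shows "c * q_inv = q_inv * c"
proof -
  have "q_inv * c = q_inv * c * (q * q_inv)"
    by (simp add: mult_q_inv)
  also have "\<dots> = q_inv * (q * c) * q_inv"
    by (simp add: mult.assoc flip: assms)
  also have "\<dots> = c * q_inv"
    by (simp add: mult.assoc[symmetric] q_inv_mult)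
  finally show ?thesis
    by simp
qed

fun triple :: "gen \<Rightarrow> 'k usl2 fps" where
  "triple GH = fps_const usl2_H" | "triple GXm = Y" | "triple GXp = q_inv * fps_const usl2_Xp"

lemma sl2_triple_triple: "sl2_triple triple"
proof -
  have Hq: "fps_const usl2_H * q_inv = q_inv * fps_const usl2_H"
    by (rule q_inv_commute[OF q_commute_H])
  have Kq: "fps_const (usl2_Xp * usl2_Xm) * q_inv = q_inv * fps_const (usl2_Xp * usl2_Xm)"
    by (rule q_inv_commute[OF q_commute_Xp_Xm])
  have "ad (fps_const usl2_H) (q_inv * fps_const usl2_Xp) = 2 * (q_inv * fps_const usl2_Xp)"
    by (simp add: ad_mult_commuting[OF Hq] ad_fps_const ad_H_Xp mult_2 distrib_left
        flip: fps_const_add)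
  then have R1: "triple GH * triple GXp - triple GXp * triple GH = 2 * triple GXp"
    by (simp add: ad_def)
  have R2: "triple GH * triple GXm - triple GXm * triple GH = - (2 * triple GXm)"
    using ad_H_Y by (simp add: ad_def mult_2)
  have "fps_const usl2_Xp * (fps_const usl2_Xm * q) = fps_const (usl2_Xp * usl2_Xm) * q"
    by (simp add: mult.assoc[symmetric])
  then have "q_inv * fps_const usl2_Xp * Y = q_inv * (fps_const (usl2_Xp * usl2_Xm) * q)"
    by (simp add: Y_eq mult.assoc)
  also have "\<dots> = fps_const (usl2_Xp * usl2_Xm)"
    by (simp add: q_commute_Xp_Xm mult.assoc[symmetric] q_inv_mult)
  finally have "q_inv * fps_const usl2_Xp * Y = fps_const (usl2_Xp * usl2_Xm)" .
  moreover have "Y * (q_inv * fps_const usl2_Xp) = fps_const usl2_Xm * (q * q_inv) * fps_const usl2_Xp"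
    by (simp add: Y_eq mult.assoc)
  then have "Y * (q_inv * fps_const usl2_Xp) = fps_const (usl2_Xm * usl2_Xp)"
    by (simp add: mult_q_inv)
  ultimately have R3: "triple GXp * triple GXm - triple GXm * triple GXp = triple GH"
    by (simp add: usl2_comm_Xp_Xm)
  show ?thesis
    unfolding sl2_triple_def using R1 R2 R3 by simp
qed

definition twist :: "'k usl2 \<Rightarrow> 'k usl2 fps" where
  "twist = usl2_lift fps_usl2_of triple"

lemma twist_alg_hom: "usl2_alg_hom fps_usl2_of twist"
  and twist_gen: "twist (usl2_gen x) = triple x"
  unfolding twist_def by (rule usl2_lift[OF central_ring_hom_fps_usl2_of sl2_triple_triple])+

lemma twist_nth_0: "twist u $ 0 = u"
proof -
  have "usl2_alg_hom usl2_of (\<lambda>u. twist u $ 0)"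
    using twist_alg_hom usl2_alg_hom_of[OF twist_alg_hom] unfolding usl2_alg_hom_def by simp
  moreover have "usl2_alg_hom usl2_of (\<lambda>u::'k usl2. u)"
    by (simp add: usl2_alg_hom_def)
  moreover have "twist (usl2_gen x) $ 0 = usl2_gen x" for x
    using twist_gen[of x] by (cases x) (simp_all add: Y_nth_0 q_inv_def)
  ultimately have "(\<lambda>u. twist u $ 0) = (\<lambda>u. u)"
    by (rule usl2_alg_hom_eqI)
  then show ?thesis
    by metis
qed

sublocale twist: fps_coeff_hom twist
  using twist_alg_hom by unfold_locales (simp_all add: usl2_alg_hom_def)

lemma twist_extension_kh_scal: "twist.extension (kh_scal f) = kh_scal f"
  by (rule twist.extension_fixed) (simp add: kh_scal_nth usl2_alg_hom_of[OF twist_alg_hom])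

definition g :: "'k usl2 fps \<Rightarrow> 'a" where
  "g = g0 \<circ> twist.extension"

lemma kh_alg_iso_g: "kh_alg_iso \<iota> g"
  unfolding kh_alg_iso_def g_def
  using bij_comp[OF twist.bij_extension[OF twist_nth_0] g0.bij]
  by (simp add: twist.extension_1 twist.extension_add twist.extension_mult twist_extension_kh_scal
      g0.one g0.add g0.mult g0.kh_scal)

lemma g_const: "g (fps_const u) = g0 (twist u)"
  by (simp add: g_def twist.extension_const)

lemma g_H: "g (fps_const usl2_H) = H"
  using twist_gen[of GH] by (simp add: g_const g0_H)

lemma g_Xm: "g (fps_const usl2_Xm) = Xm"
  using twist_gen[of GXm] by (simp add: g_const Y_def g0.apply_inv)

lemma g_modh_g0: "modh \<iota> (g (fps_const u)) (g0 (fps_const u))"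
  by (simp add: g_const g0.modh_iff_nth_0 twist_nth_0)

lemma bar_a_iso_g: "bar_a_iso \<iota> g H Xm Xp"
proof -
  interpret g: kh_iso \<iota> g
    by (rule kh_iso.intro) (rule kh_alg_iso_g)
  have g0: "modh \<iota> (g0 (fps_const 1)) 1" "\<forall>u. modh \<iota> (g0 (fps_const u)) 0 \<longrightarrow> u = 0"
    "\<forall>a. \<exists>u. modh \<iota> a (g0 (fps_const u))" "modh \<iota> (g0 (fps_const usl2_Xp)) Xp"
    using bar_a_iso_g0 by (simp_all add: bar_a_iso_def)
  note hom = g.const_alg_hom[unfolded usl2_alg_hom_def]
  note from_g0 = modh_trans[OF _ modh_sym[OF g_modh_g0]]
  show ?thesis
    unfolding bar_a_iso_def
  proof (intro conjI allI impI)
    show "modh \<iota> (g (fps_const 1)) 1"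
      using modh_trans[OF g_modh_g0 g0(1)] .
    show "modh \<iota> (g (fps_const usl2_Xp)) Xp"
      using modh_trans[OF g_modh_g0 g0(4)] .
    show "modh \<iota> (g (fps_const usl2_H)) H" "modh \<iota> (g (fps_const usl2_Xm)) Xm"
      by (simp_all add: g_H g_Xm modh_refl)
    fix u v c
    have "g (fps_const (u + v)) = g (fps_const u) + g (fps_const v)"
      "g (fps_const (u * v)) = g (fps_const u) * g (fps_const v)"
      "g (fps_const (usl2_of c * u)) = \<iota> (fps_const c) * g (fps_const u)"
      using hom by blast+
    then show "modh \<iota> (g (fps_const (u + v))) (g (fps_const u) + g (fps_const v))"
      "modh \<iota> (g (fps_const (u * v))) (g (fps_const u) * g (fps_const v))"
      "modh \<iota> (g (fps_const (usl2_of c * u))) (\<iota> (fps_const c) * g (fps_const u))"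
      by (simp_all only: modh_refl)
  next
    fix u
    assume "modh \<iota> (g (fps_const u)) 0"
    then show "u = 0"
      using g0(2) modh_trans[OF modh_sym[OF g_modh_g0]] by blast
  next
    fix a
    show "\<exists>u. modh \<iota> a (g (fps_const u))"
      using g0(3) from_g0 by blast
  qed
qed

end

theorem mainTheorem12:
  fixes sc :: "'k::field_char_0 \<Rightarrow> 'v::ab_group_add \<Rightarrow> 'v"
    and \<phi> :: "'v fps \<Rightarrow> 'a::ring_1"
    and \<iota> :: "'k fps \<Rightarrow> 'a"
    and H Xm Xp :: 'a
  assumes "formal_deformation sc \<phi> \<iota> H Xm Xp"
    and "h_trivial \<iota> H Xm Xp"
  shows "\<exists>!g. kh_alg_iso \<iota> g \<and> g (fps_const usl2_H) = H \<and> g (fps_const usl2_Xm) = Xm \<and>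
             bar_a_iso \<iota> g H Xm Xp"
proof -
  obtain g0 where "kh_alg_iso \<iota> g0" "g0 (fps_const usl2_H) = H" "bar_a_iso \<iota> g0 H Xm Xp"
    using assms(2) unfolding h_trivial_def by blast
  moreover have "a_relations H Xm Xp"
    using assms(1) by (simp add: formal_deformation_def)
  ultimately interpret h_trivialization \<iota> g0 H Xm Xp
    by unfold_locales
  show ?thesis
  proof (rule ex1I[of _ g])
    show "kh_alg_iso \<iota> g \<and> g (fps_const usl2_H) = H \<and> g (fps_const usl2_Xm) = Xm \<and> bar_a_iso \<iota> g H Xm Xp"
      using kh_alg_iso_g g_H g_Xm bar_a_iso_g by simp
  qed (use kh_alg_iso_unique kh_alg_iso_g g_H g_Xm in metis)
qed

end
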